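(* Let $n,n'$ be positive integers, let $\pi$ be a real representation of $S_n$ and $\pi'$ a real representation of $S_{n'}$, and let $\Pi=\pi\boxtimes\pi'$ be their external tensor product, a representation of $S_n\times S_{n'}$. Let $g=\frac12(\chi_\pi(1)-\chi_\pi(s_1))$ and $g'=\frac12(\chi_{\pi'}(1)-\chi_{\pi'}(s_1))$, where $s_1=(1,2)$ (in $S_n$, resp. $S_{n'}$). Then $\Pi$ is spinorial if and only if the restrictions of $\Pi$ to $S_n\times\{1\}$ and to $\{1\}\times S_{n'}$ are spinorial and $$(\deg\Pi+1)\,g g'\equiv 0 \pmod 2.$$
   Context: All representations are finite-dimensional real representations; $\chi_\pi$ is the character of $\pi$. (Note $g$ is the multiplicity of the eigenvalue $-1$ of $\pi(s_1)$ when $n\ge 2$; if $n=1$ then $g=0$.) A real representation of a finite group $G$ on a Euclidean space $V$ is regarded as a homomorphism $\pi:G\to\mathrm{O}(V)$. $\mathrm{Pin}(V)$ is the Pin group of $V$ (built from the Clifford algebra with $v^2=-|v|^2$), with the standard double cover $\rho:\mathrm{Pin}(V)\to\mathrm{O}(V)$ of kernel $\{\pm1\}$. A representation $\pi$ is spinorial if there is a homomorphism $\hat\pi:G\to\mathrm{Pin}(V)$ with $\rho\circ\hat\pi=\pi$. *)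

theory Defs
  imports "HOL-Algebra.Sym_Groups" "HOL-Algebra.Product_Groups" "Jordan_Normal_Form.Matrix"
begin

text \<open>A real representation of degree d of a group G on the Euclidean space R^d
  (standard inner product), i.e. a homomorphism G -> O(d), with O(d) the real d x d
  matrices A such that A^T A = 1.  Every finite-dimensional Euclidean space is isometric
  to some R^d, so this is no loss of generality.\<close>

definition orth_mat :: "nat \<Rightarrow> real mat \<Rightarrow> bool" where
  "orth_mat d A \<longleftrightarrow> A \<in> carrier_mat d d \<and> transpose_mat A * A = 1\<^sub>m d"

definition orth_rep :: "('g, 'b) monoid_scheme \<Rightarrow> nat \<Rightarrow> ('g \<Rightarrow> real mat) \<Rightarrow> bool" where
  "orth_rep G d \<pi> \<longleftrightarrow>
     (\<forall>g\<in>carrier G. orth_mat d (\<pi> g)) \<and>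
     (\<forall>g\<in>carrier G. \<forall>h\<in>carrier G. \<pi> (g \<otimes>\<^bsub>G\<^esub> h) = \<pi> g * \<pi> h)"

definition character :: "('g \<Rightarrow> real mat) \<Rightarrow> 'g \<Rightarrow> real" where
  "character \<pi> g = (\<Sum>i<dim_row (\<pi> g). \<pi> g $$ (i, i))"

text \<open>Kronecker product: R^d (x) R^d' is identified with R^(d d') via
  e_i (x) e_j |-> e_(i d' + j).\<close>
definition kron :: "real mat \<Rightarrow> real mat \<Rightarrow> real mat" where
  "kron A B = mat (dim_row A * dim_row B) (dim_col A * dim_col B)
     (\<lambda>(i, j). A $$ (i div dim_row B, j div dim_col B) * B $$ (i mod dim_row B, j mod dim_col B))"

definition ext_tensor :: "('g \<Rightarrow> real mat) \<Rightarrow> ('h \<Rightarrow> real mat) \<Rightarrow> ('g \<times> 'h \<Rightarrow> real mat)" where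
  "ext_tensor \<pi> \<pi>' = (\<lambda>(g, h). kron (\<pi> g) (\<pi>' h))"

definition s1 :: "nat \<Rightarrow> nat" where
  "s1 = Transposition.transpose 1 2"

definition gval :: "nat \<Rightarrow> nat \<Rightarrow> ((nat \<Rightarrow> nat) \<Rightarrow> real mat) \<Rightarrow> real" where
  "gval n d \<pi> = (if n \<ge> 2 then (real d - character \<pi> s1) / 2 else 0)"

text \<open>Elements are coefficient functions on the basis e_S, S a subset of {0..<d},
  e_S = e_(i_1) ... e_(i_k) for i_1 < ... < i_k; coefficients outside are 0.\<close>

type_synonym cl = "nat set \<Rightarrow> real"

definition cl_carrier :: "nat \<Rightarrow> cl set" where
  "cl_carrier d = {x. \<forall>S. \<not> S \<subseteq> {0..<d} \<longrightarrow> x S = 0}"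

text \<open>e_A e_B = cl_sign A B e_(A symdiff B), using e_i e_j = - e_j e_i (i \<noteq> j), e_i^2 = -1.\<close>
definition cl_sign :: "nat set \<Rightarrow> nat set \<Rightarrow> real" where
  "cl_sign A B = (-1) ^ (card {(a, b). a \<in> A \<and> b \<in> B \<and> b < a} + card (A \<inter> B))"

definition cl_mult :: "nat \<Rightarrow> cl \<Rightarrow> cl \<Rightarrow> cl" where
  "cl_mult d x y = (\<lambda>C. if C \<subseteq> {0..<d} then
      (\<Sum>A\<in>Pow {0..<d}. cl_sign A (A \<union> C - A \<inter> C) * x A * y (A \<union> C - A \<inter> C)) else 0)"

definition cl_one :: cl where
  "cl_one = (\<lambda>S. if S = {} then 1 else 0)"

definition cl_vec :: "nat \<Rightarrow> real vec \<Rightarrow> cl" where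
  "cl_vec d v = (\<lambda>S. if (\<exists>i<d. S = {i}) then v $ (THE i. S = {i}) else 0)"

definition cl_alpha :: "cl \<Rightarrow> cl" where
  "cl_alpha x = (\<lambda>S. (-1) ^ card S * x S)"

definition cl_inv :: "nat \<Rightarrow> cl \<Rightarrow> cl" where
  "cl_inv d x = (THE y. y \<in> cl_carrier d \<and> cl_mult d x y = cl_one \<and> cl_mult d y x = cl_one)"

text \<open>Pin(V): the subgroup of units of Cl(V) generated by the unit vectors,
  i.e. the set of all finite products of unit vectors.\<close>
inductive_set Pin :: "nat \<Rightarrow> cl set" for d where
  Pin_one: "cl_one \<in> Pin d"
| Pin_mult: "\<lbrakk>v \<in> carrier_vec d; v \<bullet> v = 1; x \<in> Pin d\<rbrakk> \<Longrightarrow> cl_mult d (cl_vec d v) x \<in> Pin d"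

text \<open>The standard double cover rho : Pin(V) -> O(V), the twisted adjoint action
  rho(x) v = alpha(x) v x^(-1), written as a d x d matrix (column j = rho(x) e_j).\<close>
definition pin_rho :: "nat \<Rightarrow> cl \<Rightarrow> real mat" where
  "pin_rho d x = mat d d (\<lambda>(i, j).
      cl_mult d (cl_mult d (cl_alpha x) (cl_vec d (unit_vec d j))) (cl_inv d x) {i})"

definition spinorial :: "('g, 'b) monoid_scheme \<Rightarrow> nat \<Rightarrow> ('g \<Rightarrow> real mat) \<Rightarrow> bool" where
  "spinorial G d \<pi> \<longleftrightarrow>
     (\<exists>\<pi>h. (\<forall>g\<in>carrier G. \<pi>h g \<in> Pin d \<and> pin_rho d (\<pi>h g) = \<pi> g) \<and>
           (\<forall>g\<in>carrier G. \<forall>h\<in>carrier G. \<pi>h (g \<otimes>\<^bsub>G\<^esub> h) = cl_mult d (\<pi>h g) (\<pi>h h)))"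

end

theory Submission
  imports Defs
begin

text \<open>A lift of \<open>\<Pi>\<close> to Pin restricts to lifts of \<open>\<pi> \<otimes> 1\<close> and \<open>1 \<otimes> \<pi>'\<close>; conversely, lifts
  \<open>\<phi>\<close>, \<open>\<psi>\<close> of these combine to the lift \<open>(s, t) \<mapsto> \<phi>(s) \<psi>(t)\<close> of \<open>\<Pi>\<close> as soon as their images
  commute. Since transpositions generate \<open>S_n\<close>, and lifts are unique up to sign, everything
  reduces to the sign by which lifts of \<open>\<pi>(s) \<otimes> 1\<close> and \<open>1 \<otimes> \<pi>'(t)\<close> commute for transpositions
  \<open>s\<close>, \<open>t\<close>. Now \<open>\<pi>(s)\<close> is an orthogonal involution of trace \<open>d - 2g\<close>, i.e. the reflection in a
  \<open>g\<close>-dimensional subspace, so \<open>\<pi>(s) \<otimes> 1\<close> lifts to a product of \<open>g d'\<close> orthonormal vectors and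
  \<open>1 \<otimes> \<pi>'(t)\<close> to a product of \<open>d g'\<close> vectors of the same orthonormal basis of
  \<open>\<real>^d \<otimes> \<real>^d'\<close>, \<open>g g'\<close> of them shared. Counting anticommutations gives the sign
  \<open>(-1)^(g d' d g' + g g') = (-1)^((d d' + 1) g g')\<close>.\<close>

section \<open>The Clifford algebra\<close>

text \<open>Symmetric difference, written as in the definition of \<open>cl_mult\<close> (the library's \<open>sym_diff\<close>
  is \<open>(A - B) \<union> (B - A)\<close>), so that it matches that definition syntactically.\<close>

abbreviation symd :: "'a set \<Rightarrow> 'a set \<Rightarrow> 'a set" where
  "symd A B \<equiv> A \<union> B - A \<inter> B"

lemma symd_eq_iff: "(symd A B = C) \<longleftrightarrow> (B = symd A C)"
  by blast

definition inversions :: "nat set \<Rightarrow> nat set \<Rightarrow> nat" where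
  "inversions A B = card {(a, b). a \<in> A \<and> b \<in> B \<and> b < a}"

lemma cl_sign_inversions: "cl_sign A B = (-1) ^ (inversions A B + card (A \<inter> B))"
  by (simp add: cl_sign_def inversions_def)

lemma card_symd: assumes "finite X" "finite Y"
  shows "card (symd X Y) + 2 * card (X \<inter> Y) = card X + card Y"
proof -
  have "card (X \<union> Y) + card (X \<inter> Y) = card X + card Y"
    using card_Un_Int[OF assms] by simp
  moreover have "card (X \<union> Y) = card (symd X Y) + card (X \<inter> Y)"
  proof -
    have "card (symd X Y \<union> (X \<inter> Y)) = card (symd X Y) + card (X \<inter> Y)"
      by (rule card_Un_disjoint) (use assms in auto)
    moreover have "symd X Y \<union> (X \<inter> Y) = X \<union> Y" by blast
    ultimately show ?thesis by simp
  qed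
  ultimately show ?thesis by simp
qed

lemma inversions_symd_left: assumes "finite A" "finite B" "finite C"
  shows "inversions (symd A B) C + 2 * inversions (A \<inter> B) C = inversions A C + inversions B C"
proof -
  define P where "P X = {(a, b). a \<in> X \<and> b \<in> C \<and> b < a}" for X
  have fin: "finite X \<Longrightarrow> finite (P X)" for X
    by (rule finite_subset[of _ "X \<times> C"]) (auto simp: P_def assms)
  have "P (symd A B) = symd (P A) (P B)" "P (A \<inter> B) = P A \<inter> P B"
    by (auto simp: P_def)
  moreover have "inversions X C = card (P X)" for X by (simp add: inversions_def P_def)
  ultimately show ?thesis using card_symd[OF fin[OF assms(1)] fin[OF assms(2)]]
    by simp
qed

lemma inversions_symd_right: assumes "finite A" "finite B" "finite C"
  shows "inversions A (symd B C) + 2 * inversions A (B \<inter> C) = inversions A B + inversions A C"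
proof -
  define P where "P X = {(a, b). a \<in> A \<and> b \<in> X \<and> b < a}" for X
  have fin: "finite X \<Longrightarrow> finite (P X)" for X
    by (rule finite_subset[of _ "A \<times> X"]) (auto simp: P_def assms)
  have "P (symd B C) = symd (P B) (P C)" "P (B \<inter> C) = P B \<inter> P C"
    by (auto simp: P_def)
  moreover have "inversions A X = card (P X)" for X by (simp add: inversions_def P_def)
  ultimately show ?thesis using card_symd[OF fin[OF assms(2)] fin[OF assms(3)]]
    by simp
qed

lemma neg_one_power_cong: assumes "e1 + 2 * X = e2 + 2 * (Y::nat)"
  shows "(-1::real) ^ e1 = (-1) ^ e2"
proof -
  have "(-1::real) ^ e1 = (-1) ^ (e1 + 2 * X)" by (simp add: power_add power_mult)
  also have "\<dots> = (-1) ^ (e2 + 2 * Y)" using assms by simp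
  also have "\<dots> = (-1) ^ e2" by (simp add: power_add power_mult)
  finally show ?thesis .
qed

lemma cl_sign_cocycle: assumes "finite A" "finite B" "finite C"
  shows "cl_sign A B * cl_sign (symd A B) C = cl_sign A (symd B C) * cl_sign B C"
proof -
  have c1: "card (symd A B \<inter> C) + 2 * card (A \<inter> B \<inter> C) = card (A \<inter> C) + card (B \<inter> C)"
  proof -
    have "symd A B \<inter> C = symd (A \<inter> C) (B \<inter> C)" "A \<inter> B \<inter> C = (A \<inter> C) \<inter> (B \<inter> C)" by blast+
    then show ?thesis using card_symd[of "A \<inter> C" "B \<inter> C"] assms by simp
  qed
  have c2: "card (A \<inter> symd B C) + 2 * card (A \<inter> B \<inter> C) = card (A \<inter> B) + card (A \<inter> C)"
  proof -
    have "A \<inter> symd B C = symd (A \<inter> B) (A \<inter> C)" "A \<inter> B \<inter> C = (A \<inter> B) \<inter> (A \<inter> C)" by blast+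
    then show ?thesis using card_symd[of "A \<inter> B" "A \<inter> C"] assms by simp
  qed
  have i1: "inversions (symd A B) C + 2 * inversions (A \<inter> B) C = inversions A C + inversions B C"
    by (rule inversions_symd_left[OF assms])
  have i2: "inversions A (symd B C) + 2 * inversions A (B \<inter> C) = inversions A B + inversions A C"
    by (rule inversions_symd_right[OF assms])
  have "(-1::real) ^ ((inversions A B + card (A \<inter> B)) + (inversions (symd A B) C + card (symd A B \<inter> C)))
      = (-1) ^ ((inversions A (symd B C) + card (A \<inter> symd B C)) + (inversions B C + card (B \<inter> C)))"
    by (rule neg_one_power_cong[where X = "inversions (A \<inter> B) C + card (A \<inter> B \<inter> C)"
          and Y = "inversions A (B \<inter> C) + card (A \<inter> B \<inter> C)"]) (use c1 c2 i1 i2 in \<open>unfold distrib_left; linarith\<close>)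
  then show ?thesis by (simp add: cl_sign_inversions power_add)
qed

lemma cl_mult_apply: "C \<subseteq> {0..<d} \<Longrightarrow>
  cl_mult d x y C = (\<Sum>A\<in>Pow {0..<d}. cl_sign A (symd A C) * x A * y (symd A C))"
  by (simp add: cl_mult_def)

lemma cl_mult_outside: "\<not> C \<subseteq> {0..<d} \<Longrightarrow> cl_mult d x y C = 0"
  by (simp add: cl_mult_def)

lemma symd_symd: "symd A (symd A C) = C"
  by blast

lemma sum_Pow_symd_reindex: assumes "A \<in> Pow {0..<d}"
  shows "(\<Sum>C\<in>Pow {0..<d}. f C) = (\<Sum>B\<in>Pow {0..<d}. f (symd A B))"
  by (rule sum.reindex_bij_witness[where i = "\<lambda>C. symd A C" and j = "\<lambda>C. symd A C"])
     (use assms in \<open>auto simp: symd_symd\<close>)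

lemma cl_mult_mult_left_apply:
  assumes D: "D \<subseteq> {0..<d}"
  shows "cl_mult d (cl_mult d x y) z D = (\<Sum>A\<in>Pow {0..<d}. \<Sum>B\<in>Pow {0..<d}.
    cl_sign A B * cl_sign (symd A B) (symd (symd A B) D) * x A * y B * z (symd (symd A B) D))"
proof -
  let ?P = "Pow {0..<d}"
  have "cl_mult d (cl_mult d x y) z D =
     (\<Sum>C\<in>?P. \<Sum>A\<in>?P. cl_sign A (symd A C) * cl_sign C (symd C D) * x A * y (symd A C) * z (symd C D))"
    using D by (auto simp: cl_mult_apply sum_distrib_left sum_distrib_right mult_ac intro!: sum.cong)
  also have "\<dots> = (\<Sum>A\<in>?P. \<Sum>C\<in>?P. cl_sign A (symd A C) * cl_sign C (symd C D) * x A * y (symd A C) * z (symd C D))"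
    by (rule sum.swap)
  also have "\<dots> = (\<Sum>A\<in>?P. \<Sum>B\<in>?P.
      cl_sign A B * cl_sign (symd A B) (symd (symd A B) D) * x A * y B * z (symd (symd A B) D))"
  proof (rule sum.cong[OF refl])
    fix A assume "A \<in> ?P"
    then show "(\<Sum>C\<in>?P. cl_sign A (symd A C) * cl_sign C (symd C D) * x A * y (symd A C) * z (symd C D)) =
      (\<Sum>B\<in>?P. cl_sign A B * cl_sign (symd A B) (symd (symd A B) D) * x A * y B * z (symd (symd A B) D))"
      by (subst sum_Pow_symd_reindex[of A]) (simp_all only: symd_symd)
  qed
  finally show ?thesis .
qed

lemma cl_mult_mult_right_apply:
  assumes D: "D \<subseteq> {0..<d}"
  shows "cl_mult d x (cl_mult d y z) D = (\<Sum>A\<in>Pow {0..<d}. \<Sum>B\<in>Pow {0..<d}.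
    cl_sign A (symd A D) * cl_sign B (symd B (symd A D)) * x A * y B * z (symd B (symd A D)))"
proof -
  have "symd A D \<subseteq> {0..<d}" if "A \<in> Pow {0..<d}" for A using that D by auto
  then show ?thesis using D by (auto simp: cl_mult_apply sum_distrib_left mult_ac intro!: sum.cong)
qed

lemma cl_mult_assoc: "cl_mult d (cl_mult d x y) z = cl_mult d x (cl_mult d y z)"
proof
  fix D
  show "cl_mult d (cl_mult d x y) z D = cl_mult d x (cl_mult d y z) D"
  proof (cases "D \<subseteq> {0..<d}")
    case True
    have "cl_sign A B * cl_sign (symd A B) (symd (symd A B) D) = cl_sign A (symd A D) * cl_sign B (symd B (symd A D))"
      if "A \<in> Pow {0..<d}" "B \<in> Pow {0..<d}" for A B
    proof -
      have "finite A" "finite B" "finite (symd (symd A B) D)"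
        using that True finite_subset[of _ "{0..<d}"] by auto
      moreover have "symd B (symd (symd A B) D) = symd A D" "symd B (symd A D) = symd (symd A B) D" by blast+
      ultimately show ?thesis using cl_sign_cocycle by metis
    qed
    moreover have "symd B (symd A D) = symd (symd A B) D" for A B by blast
    ultimately show ?thesis
      unfolding cl_mult_mult_left_apply[OF True] cl_mult_mult_right_apply[OF True]
      by (intro sum.cong refl) simp
  qed (simp add: cl_mult_outside)
qed

lemma cl_mult_double_sum: "cl_mult d x y C = (\<Sum>A\<in>Pow {0..<d}. \<Sum>B\<in>Pow {0..<d}.
    if symd A B = C then cl_sign A B * x A * y B else 0)"
proof (cases "C \<subseteq> {0..<d}")
  case True
  have "cl_mult d x y C = (\<Sum>A\<in>Pow {0..<d}. cl_sign A (symd A C) * x A * y (symd A C))"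
    using True by (simp add: cl_mult_def)
  also have "\<dots> = (\<Sum>A\<in>Pow {0..<d}. \<Sum>B\<in>Pow {0..<d}.
    if symd A B = C then cl_sign A B * x A * y B else 0)"
  proof (rule sum.cong[OF refl])
    fix A assume A: "A \<in> Pow {0..<d}"
    have "(\<Sum>B\<in>Pow {0..<d}. if symd A B = C then cl_sign A B * x A * y B else 0)
       = (\<Sum>B\<in>Pow {0..<d}. if B = symd A C then cl_sign A B * x A * y B else 0)"
      by (rule sum.cong[OF refl]) (simp only: symd_eq_iff)
    also have "\<dots> = cl_sign A (symd A C) * x A * y (symd A C)"
      using A True by (subst sum.delta) auto
    finally show "cl_sign A (symd A C) * x A * y (symd A C) = (\<Sum>B\<in>Pow {0..<d}.
      if symd A B = C then cl_sign A B * x A * y B else 0)" by simp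
  qed
  finally show ?thesis .
next
  case False
  have "cl_mult d x y C = 0" using False by (simp add: cl_mult_def)
  moreover have "(\<Sum>A\<in>Pow {0..<d}. \<Sum>B\<in>Pow {0..<d}.
    if symd A B = C then cl_sign A B * x A * y B else 0) = 0"
    by (rule sum.neutral, rule ballI, rule sum.neutral) (use False in auto)
  ultimately show ?thesis by simp
qed

definition cl_scale :: "real \<Rightarrow> cl \<Rightarrow> cl" where "cl_scale c x = (\<lambda>S. c * x S)"
definition cl_add :: "cl \<Rightarrow> cl \<Rightarrow> cl" where "cl_add x y = (\<lambda>S. x S + y S)"

lemma cl_mult_carrier[simp]: "cl_mult d x y \<in> cl_carrier d"
  by (simp add: cl_carrier_def cl_mult_def)

lemma cl_one_carrier[simp]: "cl_one \<in> cl_carrier d"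
  by (simp add: cl_carrier_def cl_one_def)

lemma cl_vec_carrier[simp]: "cl_vec d v \<in> cl_carrier d"
  by (auto simp: cl_carrier_def cl_vec_def)

lemma cl_scale_carrier[simp]: "x \<in> cl_carrier d \<Longrightarrow> cl_scale c x \<in> cl_carrier d"
  by (simp add: cl_carrier_def cl_scale_def)

lemma cl_carrierD: "x \<in> cl_carrier d \<Longrightarrow> \<not> S \<subseteq> {0..<d} \<Longrightarrow> x S = 0"
  by (simp add: cl_carrier_def)

lemma cl_sign_empty_left[simp]: "cl_sign {} B = 1"
  by (simp add: cl_sign_def)

lemma cl_sign_empty_right[simp]: "cl_sign A {} = 1"
  by (simp add: cl_sign_def)

lemma cl_mult_one_left: assumes "x \<in> cl_carrier d" shows "cl_mult d cl_one x = x"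
proof
  fix C show "cl_mult d cl_one x C = x C"
  proof (cases "C \<subseteq> {0..<d}")
    case True
    have "cl_mult d cl_one x C = (\<Sum>A\<in>Pow {0..<d}. if A = {} then x (symd A C) else 0)"
      unfolding cl_mult_apply[OF True] by (rule sum.cong) (auto simp: cl_one_def)
    also have "\<dots> = x C" by (subst sum.delta) auto
    finally show ?thesis .
  qed (use assms in \<open>simp add: cl_mult_outside cl_carrierD\<close>)
qed

lemma cl_mult_one_right: assumes "x \<in> cl_carrier d" shows "cl_mult d x cl_one = x"
proof
  fix C show "cl_mult d x cl_one C = x C"
  proof (cases "C \<subseteq> {0..<d}")
    case True
    have "cl_mult d x cl_one C = (\<Sum>A\<in>Pow {0..<d}. if A = C then x A else 0)"
      unfolding cl_mult_apply[OF True]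
    proof (rule sum.cong[OF refl])
      fix A assume "A \<in> Pow {0..<d}"
      have "symd A C = {} \<longleftrightarrow> A = C" by blast
      then show "cl_sign A (symd A C) * x A * cl_one (symd A C) = (if A = C then x A else 0)"
        by (auto simp: cl_one_def)
    qed
    also have "\<dots> = x C" using True by (subst sum.delta) auto
    finally show ?thesis .
  qed (use assms in \<open>simp add: cl_mult_outside cl_carrierD\<close>)
qed

lemma cl_mult_scale_left: "cl_mult d (cl_scale c x) y = cl_scale c (cl_mult d x y)"
  by (auto simp: cl_mult_def cl_scale_def sum_distrib_left mult_ac intro!: sum.cong)

lemma cl_mult_scale_right: "cl_mult d x (cl_scale c y) = cl_scale c (cl_mult d x y)"
  by (auto simp: cl_mult_def cl_scale_def sum_distrib_left mult_ac intro!: sum.cong)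

lemma cl_mult_add_left: "cl_mult d (cl_add x y) z = cl_add (cl_mult d x z) (cl_mult d y z)"
  by (auto simp: cl_mult_def cl_add_def sum.distrib algebra_simps intro!: sum.cong)

lemma cl_scale_scale[simp]: "cl_scale a (cl_scale b x) = cl_scale (a * b) x"
  by (simp add: cl_scale_def mult.assoc)

lemma cl_scale_one[simp]: "cl_scale 1 x = x"
  by (simp add: cl_scale_def)

lemma cl_alpha_mult: "cl_alpha (cl_mult d x y) = cl_mult d (cl_alpha x) (cl_alpha y)"
proof
  fix C show "cl_alpha (cl_mult d x y) C = cl_mult d (cl_alpha x) (cl_alpha y) C"
  proof (cases "C \<subseteq> {0..<d}")
    case True
    have "(-1::real) ^ card C = (-1) ^ card A * (-1) ^ card (symd A C)" if "A \<in> Pow {0..<d}" for A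
    proof -
      have fin: "finite A" "finite C" using that True by (auto intro: finite_subset)
      have "(-1::real) ^ card C = (-1) ^ (card A + card (symd A C))"
        by (rule neg_one_power_cong[where X = "card A" and Y = "card (A \<inter> C)"])
           (use card_symd[OF fin] in linarith)
      then show ?thesis by (simp add: power_add)
    qed
    note eq = this
    show ?thesis
      unfolding cl_alpha_def cl_mult_apply[OF True] sum_distrib_left
    proof (rule sum.cong[OF refl])
      fix A assume A: "A \<in> Pow {0..<d}"
      show "(-1) ^ card C * (cl_sign A (symd A C) * x A * y (symd A C)) =
        cl_sign A (symd A C) * ((-1) ^ card A * x A) * ((-1) ^ card (symd A C) * y (symd A C))"
        unfolding eq[OF A] by (simp only: mult_ac)
    qed
  qed (simp add: cl_alpha_def cl_mult_outside)
qed

lemma cl_alpha_one[simp]: "cl_alpha cl_one = cl_one"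
  by (auto simp: cl_alpha_def cl_one_def)

lemma cl_alpha_vec: "cl_alpha (cl_vec d v) = cl_scale (-1) (cl_vec d v)"
  by (auto simp: cl_alpha_def cl_vec_def cl_scale_def fun_eq_iff)

lemma cl_vec_singleton: "i < d \<Longrightarrow> cl_vec d v {i} = v $ i"
  by (auto simp: cl_vec_def)

lemma sum_Pow_cl_vec: "(\<Sum>A\<in>Pow {0..<d}. cl_vec d v A * g A) = (\<Sum>i<d. v $ i * g {i})"
proof -
  have "(\<Sum>A\<in>Pow {0..<d}. cl_vec d v A * g A) = (\<Sum>A\<in>(\<lambda>i. {i}) ` {0..<d}. cl_vec d v A * g A)"
    by (rule sum.mono_neutral_right) (auto simp: cl_vec_def)
  also have "\<dots> = (\<Sum>i\<in>{0..<d}. cl_vec d v {i} * g {i})"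
    by (subst sum.reindex) (auto simp: inj_on_def)
  also have "\<dots> = (\<Sum>i<d. v $ i * g {i})"
    by (rule sum.cong) (auto simp: cl_vec_singleton)
  finally show ?thesis .
qed

lemma sum_Pow_cl_vec': "(\<Sum>A\<in>Pow {0..<d}. g A * cl_vec d v A) = (\<Sum>i<d. g {i} * v $ i)"
  using sum_Pow_cl_vec[of d v g] by (simp add: mult.commute)

lemma cl_sign_singletons: "cl_sign {i} {j} = (if i = j then -1 else if j < i then -1 else 1)"
proof -
  have "{(a, b). a \<in> {i} \<and> b \<in> {j} \<and> b < a} = (if j < i then {(i, j)} else {})" by auto
  then show ?thesis by (auto simp: cl_sign_def)
qed

lemma cl_vec_mult_vec: "cl_mult d (cl_vec d u) (cl_vec d w) C =
   (\<Sum>i<d. \<Sum>j<d. if symd {i} {j} = C then cl_sign {i} {j} * u $ i * w $ j else 0)"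
proof -
  have "cl_mult d (cl_vec d u) (cl_vec d w) C = (\<Sum>A\<in>Pow {0..<d}. cl_vec d u A *
      (\<Sum>B\<in>Pow {0..<d}. (if symd A B = C then cl_sign A B else 0) * cl_vec d w B))"
    by (auto simp: cl_mult_double_sum sum_distrib_left intro!: sum.cong)
  also have "\<dots> = (\<Sum>i<d. u $ i * (\<Sum>j<d. (if symd {i} {j} = C then cl_sign {i} {j} else 0) * w $ j))"
    by (simp add: sum_Pow_cl_vec sum_Pow_cl_vec')
  also have "\<dots> = (\<Sum>i<d. \<Sum>j<d. if symd {i} {j} = C then cl_sign {i} {j} * u $ i * w $ j else 0)"
    by (auto simp: sum_distrib_left intro!: sum.cong)
  finally show ?thesis .
qed

lemma cl_vec_anticommutator: assumes "w \<in> carrier_vec d"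
  shows "cl_add (cl_mult d (cl_vec d u) (cl_vec d w)) (cl_mult d (cl_vec d w) (cl_vec d u))
     = cl_scale (-2 * (u \<bullet> w)) cl_one"
proof
  fix C
  have "cl_add (cl_mult d (cl_vec d u) (cl_vec d w)) (cl_mult d (cl_vec d w) (cl_vec d u)) C
     = (\<Sum>i<d. \<Sum>j<d. if symd {i} {j} = C then cl_sign {i} {j} * u $ i * w $ j else 0)
     + (\<Sum>j<d. \<Sum>i<d. if symd {j} {i} = C then cl_sign {j} {i} * w $ j * u $ i else 0)"
    by (simp add: cl_add_def cl_vec_mult_vec)
  also have "(\<Sum>j<d. \<Sum>i<d. if symd {j} {i} = C then cl_sign {j} {i} * w $ j * u $ i else 0)
     = (\<Sum>i<d. \<Sum>j<d. if symd {i} {j} = C then cl_sign {j} {i} * u $ i * w $ j else 0)"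
    by (subst sum.swap) (auto simp: Un_commute Int_commute mult_ac intro!: sum.cong)
  also have "(\<Sum>i<d. \<Sum>j<d. if symd {i} {j} = C then cl_sign {i} {j} * u $ i * w $ j else 0)
     + (\<Sum>i<d. \<Sum>j<d. if symd {i} {j} = C then cl_sign {j} {i} * u $ i * w $ j else 0)
     = (\<Sum>i<d. \<Sum>j<d. if j = i then (if C = {} then -2 * u $ i * w $ j else 0) else 0)"
    unfolding sum.distrib[symmetric]
    by (rule sum.cong[OF refl], rule sum.cong[OF refl]) (auto simp: cl_sign_singletons)
  also have "\<dots> = (\<Sum>i<d. if C = {} then -2 * u $ i * w $ i else 0)"
    by (rule sum.cong[OF refl]) (subst sum.delta, auto)
  also have "\<dots> = cl_scale (-2 * (u \<bullet> w)) cl_one C"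
    using assms by (auto simp: cl_scale_def cl_one_def scalar_prod_def sum_distrib_left atLeast0LessThan mult_ac)
  finally show "cl_add (cl_mult d (cl_vec d u) (cl_vec d w)) (cl_mult d (cl_vec d w) (cl_vec d u)) C
     = cl_scale (-2 * (u \<bullet> w)) cl_one C" .
qed

definition normalized_vec :: "nat \<Rightarrow> real vec \<Rightarrow> bool" where
  "normalized_vec d u \<longleftrightarrow> u \<in> carrier_vec d \<and> u \<bullet> u = 1"

lemma cl_vec_square: assumes "normalized_vec d u"
  shows "cl_mult d (cl_vec d u) (cl_vec d u) = cl_scale (-1) cl_one"
proof -
  have "cl_add (cl_mult d (cl_vec d u) (cl_vec d u)) (cl_mult d (cl_vec d u) (cl_vec d u)) = cl_scale (-2) cl_one"
    using cl_vec_anticommutator[of u d u] assms by (simp add: normalized_vec_def)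
  then have "\<And>S. cl_mult d (cl_vec d u) (cl_vec d u) S + cl_mult d (cl_vec d u) (cl_vec d u) S = -2 * cl_one S"
    by (simp add: cl_add_def cl_scale_def fun_eq_iff)
  then show ?thesis by (simp add: cl_scale_def fun_eq_iff)
qed

lemma cl_vec_orthogonal: assumes "w \<in> carrier_vec d" "u \<bullet> w = 0"
  shows "cl_mult d (cl_vec d u) (cl_vec d w) = cl_scale (-1) (cl_mult d (cl_vec d w) (cl_vec d u))"
proof -
  have "cl_add (cl_mult d (cl_vec d u) (cl_vec d w)) (cl_mult d (cl_vec d w) (cl_vec d u)) = cl_scale 0 cl_one"
    using cl_vec_anticommutator[of w d u] assms by simp
  then have "\<And>S. cl_mult d (cl_vec d u) (cl_vec d w) S + cl_mult d (cl_vec d w) (cl_vec d u) S = 0"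
    by (simp add: cl_add_def cl_scale_def fun_eq_iff)
  then show ?thesis by (simp add: cl_scale_def fun_eq_iff add_eq_0_iff2)
qed

lemma cl_vec_add_scale: "cl_vec d (vec d (\<lambda>i. w $ i + c * u $ i)) = cl_add (cl_vec d w) (cl_scale c (cl_vec d u))"
  by (auto simp: cl_vec_def cl_add_def cl_scale_def fun_eq_iff)

lemma cl_vec_uminus: "cl_vec d (vec d (\<lambda>i. - u $ i)) = cl_scale (-1) (cl_vec d u)"
  by (auto simp: cl_vec_def cl_scale_def fun_eq_iff)

lemma normalized_vec_uminus: "normalized_vec d u \<Longrightarrow> normalized_vec d (vec d (\<lambda>i. - u $ i))"
  by (auto simp: normalized_vec_def scalar_prod_def)

lemma cl_vec_reflect: assumes u: "normalized_vec d u" and w: "w \<in> carrier_vec d"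
  shows "cl_mult d (cl_mult d (cl_vec d u) (cl_vec d w)) (cl_vec d u)
     = cl_vec d (vec d (\<lambda>i. w $ i + (- 2 * (u \<bullet> w)) * u $ i))"
proof -
  have uw: "cl_mult d (cl_vec d u) (cl_vec d w) =
      cl_add (cl_scale (-1) (cl_mult d (cl_vec d w) (cl_vec d u))) (cl_scale (-2 * (u \<bullet> w)) cl_one)"
  proof
    fix S
    have "cl_mult d (cl_vec d u) (cl_vec d w) S + cl_mult d (cl_vec d w) (cl_vec d u) S = -2 * (u \<bullet> w) * cl_one S"
      using fun_cong[OF cl_vec_anticommutator[OF w, of u], of S] by (simp add: cl_add_def cl_scale_def)
    then show "cl_mult d (cl_vec d u) (cl_vec d w) S =
      cl_add (cl_scale (-1) (cl_mult d (cl_vec d w) (cl_vec d u))) (cl_scale (-2 * (u \<bullet> w)) cl_one) S"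
      by (simp add: cl_add_def cl_scale_def)
  qed
  have "cl_mult d (cl_mult d (cl_vec d u) (cl_vec d w)) (cl_vec d u)
     = cl_add (cl_scale (-1) (cl_mult d (cl_vec d w) (cl_mult d (cl_vec d u) (cl_vec d u)))) (cl_scale (-2 * (u \<bullet> w)) (cl_vec d u))"
    unfolding uw cl_mult_add_left cl_mult_scale_left cl_mult_assoc by (simp add: cl_mult_one_left)
  also have "\<dots> = cl_add (cl_vec d w) (cl_scale (-2 * (u \<bullet> w)) (cl_vec d u))"
    unfolding cl_vec_square[OF u] cl_mult_scale_right by (simp add: cl_mult_one_right)
  finally show ?thesis unfolding cl_vec_add_scale .
qed

section \<open>The Pin group and its twisted adjoint representation\<close>

lemma Pin_carrier: "x \<in> Pin d \<Longrightarrow> x \<in> cl_carrier d"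
  by (induction rule: Pin.induct) auto

lemma Pin_mult_closed: "x \<in> Pin d \<Longrightarrow> y \<in> Pin d \<Longrightarrow> cl_mult d x y \<in> Pin d"
proof (induction rule: Pin.induct)
  case Pin_one
  then show ?case by (simp add: cl_mult_one_left Pin_carrier)
next
  case (Pin_mult v x)
  then show ?case by (simp add: cl_mult_assoc Pin.Pin_mult)
qed

lemma Pin_cl_vec: "normalized_vec d u \<Longrightarrow> cl_vec d u \<in> Pin d"
  using Pin.Pin_mult[OF _ _ Pin.Pin_one, of u d] by (simp add: normalized_vec_def cl_mult_one_right)

lemma Pin_uminus_cl_vec: "normalized_vec d u \<Longrightarrow> cl_scale (-1) (cl_vec d u) \<in> Pin d"
  using Pin_cl_vec[OF normalized_vec_uminus] by (simp add: cl_vec_uminus)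

lemma Pin_inverse: "x \<in> Pin d \<Longrightarrow> \<exists>y\<in>Pin d. cl_mult d x y = cl_one \<and> cl_mult d y x = cl_one"
proof (induction rule: Pin.induct)
  case Pin_one
  then show ?case by (intro bexI[of _ cl_one]) (auto simp: cl_mult_one_left Pin.Pin_one)
next
  case (Pin_mult v x)
  then obtain y where y: "y \<in> Pin d" "cl_mult d x y = cl_one" "cl_mult d y x = cl_one" by blast
  have u: "normalized_vec d v" using Pin_mult by (simp add: normalized_vec_def)
  let ?y = "cl_mult d y (cl_scale (-1) (cl_vec d v))"
  have "?y \<in> Pin d" by (rule Pin_mult_closed[OF y(1) Pin_uminus_cl_vec[OF u]])
  moreover have "cl_mult d (cl_mult d (cl_vec d v) x) ?y = cl_one"
  proof -
    have "cl_mult d (cl_mult d (cl_vec d v) x) ?y = cl_scale (-1) (cl_mult d (cl_vec d v) (cl_mult d (cl_mult d x y) (cl_vec d v)))"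
      by (simp add: cl_mult_assoc cl_mult_scale_right)
    also have "\<dots> = cl_one" by (simp add: y cl_mult_one_left cl_vec_square[OF u] cl_mult_scale_right)
    finally show ?thesis .
  qed
  moreover have "cl_mult d ?y (cl_mult d (cl_vec d v) x) = cl_one"
  proof -
    have "cl_mult d ?y (cl_mult d (cl_vec d v) x) = cl_scale (-1) (cl_mult d y (cl_mult d (cl_mult d (cl_vec d v) (cl_vec d v)) x))"
      by (simp add: cl_mult_assoc cl_mult_scale_right cl_mult_scale_left)
    also have "\<dots> = cl_one" using Pin_carrier[OF Pin_mult(3)]
      by (simp add: y cl_mult_one_left cl_vec_square[OF u] cl_mult_scale_right cl_mult_scale_left)
    finally show ?thesis .
  qed
  ultimately show ?case by blast
qed

lemma cl_inv_eq: assumes x: "x \<in> Pin d" and y: "y \<in> cl_carrier d"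
  and xy: "cl_mult d x y = cl_one" and yx: "cl_mult d y x = cl_one"
  shows "cl_inv d x = y"
  unfolding cl_inv_def
proof (rule the_equality)
  show "y \<in> cl_carrier d \<and> cl_mult d x y = cl_one \<and> cl_mult d y x = cl_one" using y xy yx by simp
next
  fix z assume z: "z \<in> cl_carrier d \<and> cl_mult d x z = cl_one \<and> cl_mult d z x = cl_one"
  have "z = cl_mult d (cl_mult d y x) z" using z by (simp add: yx cl_mult_one_left)
  also have "\<dots> = cl_mult d y (cl_mult d x z)" by (simp add: cl_mult_assoc)
  also have "\<dots> = y" using z y by (simp add: cl_mult_one_right)
  finally show "z = y" .
qed

lemma cl_inv_Pin: assumes x: "x \<in> Pin d"
  shows "cl_inv d x \<in> Pin d" "cl_mult d x (cl_inv d x) = cl_one" "cl_mult d (cl_inv d x) x = cl_one"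
proof -
  obtain y where y: "y \<in> Pin d" "cl_mult d x y = cl_one" "cl_mult d y x = cl_one"
    using Pin_inverse[OF x] by blast
  have "cl_inv d x = y" by (rule cl_inv_eq[OF x Pin_carrier[OF y(1)] y(2,3)])
  then show "cl_inv d x \<in> Pin d" "cl_mult d x (cl_inv d x) = cl_one" "cl_mult d (cl_inv d x) x = cl_one"
    using y by auto
qed

lemma cl_inv_mult: assumes x: "x \<in> Pin d" and y: "y \<in> Pin d"
  shows "cl_inv d (cl_mult d x y) = cl_mult d (cl_inv d y) (cl_inv d x)"
proof (rule cl_inv_eq)
  note xi = cl_inv_Pin[OF x] and yi = cl_inv_Pin[OF y]
  show "cl_mult d x y \<in> Pin d" by (rule Pin_mult_closed[OF x y])
  show "cl_mult d (cl_inv d y) (cl_inv d x) \<in> cl_carrier d" by simp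
  have "cl_mult d (cl_mult d x y) (cl_mult d (cl_inv d y) (cl_inv d x))
     = cl_mult d x (cl_mult d (cl_mult d y (cl_inv d y)) (cl_inv d x))"
    by (simp only: cl_mult_assoc)
  also have "\<dots> = cl_one"
    using xi yi Pin_carrier[OF xi(1)] by (simp add: cl_mult_one_left)
  finally show "cl_mult d (cl_mult d x y) (cl_mult d (cl_inv d y) (cl_inv d x)) = cl_one" .
  have "cl_mult d (cl_mult d (cl_inv d y) (cl_inv d x)) (cl_mult d x y)
     = cl_mult d (cl_inv d y) (cl_mult d (cl_mult d (cl_inv d x) x) y)"
    by (simp only: cl_mult_assoc)
  also have "\<dots> = cl_one"
    using xi yi Pin_carrier[OF y] by (simp add: cl_mult_one_left)
  finally show "cl_mult d (cl_mult d (cl_inv d y) (cl_inv d x)) (cl_mult d x y) = cl_one" .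
qed

lemma cl_inv_one: "cl_inv d cl_one = cl_one"
  by (rule cl_inv_eq) (auto simp: Pin.Pin_one cl_mult_one_left)

lemma cl_inv_vec: assumes u: "normalized_vec d u"
  shows "cl_inv d (cl_vec d u) = cl_scale (-1) (cl_vec d u)"
  by (rule cl_inv_eq[OF Pin_cl_vec[OF u]])
     (auto simp: cl_mult_scale_left cl_mult_scale_right cl_vec_square[OF u])

lemma sum_delta_left: "i < (d::nat) \<Longrightarrow> (\<Sum>l<d. (if i = l then 1 else 0) * (f l :: real)) = f i"
proof -
  assume i: "i < d"
  have "(\<Sum>l<d. (if i = l then 1 else 0) * f l) = (\<Sum>l<d. if l = i then f l else 0)"
    by (rule sum.cong) auto
  also have "\<dots> = f i" using i by (subst sum.delta) auto
  finally show ?thesis .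
qed

lemma sum_delta_right: "j < (d::nat) \<Longrightarrow> (\<Sum>k<d. (f k :: real) * (if k = j then 1 else 0)) = f j"
  using sum_delta_left[of j d f] by (simp add: mult.commute eq_commute)

definition reflection_mat :: "nat \<Rightarrow> real vec \<Rightarrow> real mat" where
  "reflection_mat d u = mat d d (\<lambda>(i, j). (if i = j then 1 else 0) - 2 * u $ i * u $ j)"

lemma reflection_mat_carrier[simp]: "reflection_mat d u \<in> carrier_mat d d"
  by (simp add: reflection_mat_def)

lemma reflection_mat_mult_vec: assumes "u \<in> carrier_vec d" "w \<in> carrier_vec d"
  shows "reflection_mat d u *\<^sub>v w = vec d (\<lambda>i. w $ i + (- 2 * (u \<bullet> w)) * u $ i)"
proof (rule eq_vecI)
  fix i assume "i < dim_vec (vec d (\<lambda>i. w $ i + - 2 * (u \<bullet> w) * u $ i))"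
  then have i: "i < d" by simp
  have "(reflection_mat d u *\<^sub>v w) $ i = (\<Sum>j<d. (if i = j then 1 else 0) * w $ j) - (\<Sum>j<d. 2 * u $ i * u $ j * w $ j)"
    using i assms by (simp add: reflection_mat_def scalar_prod_def atLeast0LessThan left_diff_distrib sum_subtractf)
  also have "\<dots> = w $ i - 2 * u $ i * (u \<bullet> w)"
    unfolding sum_delta_left[OF i] using assms by (simp add: sum_distrib_left mult_ac scalar_prod_def atLeast0LessThan)
  finally show "(reflection_mat d u *\<^sub>v w) $ i = vec d (\<lambda>i. w $ i + - 2 * (u \<bullet> w) * u $ i) $ i"
    using i by simp
qed (simp add: reflection_mat_def)

text \<open>\<open>pin_rho\<close> is defined entrywise; this characterises the matrix of the twisted adjoint action
  \<open>w \<mapsto> \<alpha>(x) w x\<inverse>\<close> by its values on all vectors, the form used in the inductive arguments.\<close>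

definition twisted_adjoint :: "nat \<Rightarrow> cl \<Rightarrow> real mat \<Rightarrow> bool" where
  "twisted_adjoint d x R \<longleftrightarrow> R \<in> carrier_mat d d \<and>
     (\<forall>w\<in>carrier_vec d. cl_mult d (cl_mult d (cl_alpha x) (cl_vec d w)) (cl_inv d x) = cl_vec d (R *\<^sub>v w))"

lemma twisted_adjoint_exists: "x \<in> Pin d \<Longrightarrow> \<exists>R. twisted_adjoint d x R"
proof (induction rule: Pin.induct)
  case Pin_one
  show ?case
    by (rule exI[of _ "1\<^sub>m d"]) (auto simp: twisted_adjoint_def cl_inv_one cl_mult_one_left cl_mult_one_right)
next
  case (Pin_mult v x)
  have u: "normalized_vec d v" using Pin_mult by (simp add: normalized_vec_def)
  obtain R where R: "twisted_adjoint d x R" using Pin_mult by blast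
  show ?case
  proof (rule exI[of _ "reflection_mat d v * R"], unfold twisted_adjoint_def, intro conjI ballI)
    show "reflection_mat d v * R \<in> carrier_mat d d" using R by (auto simp: twisted_adjoint_def intro!: mult_carrier_mat)
    fix w :: "real vec" assume w: "w \<in> carrier_vec d"
    have Rw: "R *\<^sub>v w \<in> carrier_vec d" using R w by (auto simp: twisted_adjoint_def)
    have "cl_mult d (cl_mult d (cl_alpha (cl_mult d (cl_vec d v) x)) (cl_vec d w)) (cl_inv d (cl_mult d (cl_vec d v) x))
       = cl_mult d (cl_mult d (cl_vec d v) (cl_mult d (cl_mult d (cl_alpha x) (cl_vec d w)) (cl_inv d x))) (cl_vec d v)"
      unfolding cl_inv_mult[OF Pin_cl_vec[OF u] Pin_mult(3)] cl_alpha_mult cl_alpha_vec cl_inv_vec[OF u]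
      by (simp add: cl_mult_assoc cl_mult_scale_left cl_mult_scale_right)
    also have "\<dots> = cl_vec d (vec d (\<lambda>i. (R *\<^sub>v w) $ i + (- 2 * (v \<bullet> (R *\<^sub>v w))) * v $ i))"
      using R w by (simp add: twisted_adjoint_def cl_vec_reflect[OF u Rw])
    also have "\<dots> = cl_vec d ((reflection_mat d v * R) *\<^sub>v w)"
    proof -
      have Rc: "R \<in> carrier_mat d d" using R by (simp add: twisted_adjoint_def)
      have "(reflection_mat d v * R) *\<^sub>v w = reflection_mat d v *\<^sub>v (R *\<^sub>v w)"
        using Rc w by (simp add: assoc_mult_mat_vec[of _ d d])
      also have "\<dots> = vec d (\<lambda>i. (R *\<^sub>v w) $ i + (- 2 * (v \<bullet> (R *\<^sub>v w))) * v $ i)"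
        by (rule reflection_mat_mult_vec) (use u Rw in \<open>auto simp: normalized_vec_def\<close>)
      finally show ?thesis by simp
    qed
    finally show "cl_mult d (cl_mult d (cl_alpha (cl_mult d (cl_vec d v) x)) (cl_vec d w)) (cl_inv d (cl_mult d (cl_vec d v) x))
       = cl_vec d ((reflection_mat d v * R) *\<^sub>v w)" .
  qed
qed

lemma pin_rho_eqI: assumes "twisted_adjoint d x R" shows "pin_rho d x = R"
proof
  show "dim_row (pin_rho d x) = dim_row R" "dim_col (pin_rho d x) = dim_col R"
    using assms by (auto simp: pin_rho_def twisted_adjoint_def)
  fix i j assume "i < dim_row R" "j < dim_col R"
  then have ij: "i < d" "j < d" using assms by (auto simp: twisted_adjoint_def)
  have "pin_rho d x $$ (i, j) = cl_vec d (R *\<^sub>v unit_vec d j) {i}"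
    using assms ij by (simp add: pin_rho_def twisted_adjoint_def)
  also have "\<dots> = R $$ (i, j)"
  proof -
    have Rc: "R \<in> carrier_mat d d" using assms by (simp add: twisted_adjoint_def)
    then show ?thesis using ij by (simp add: cl_vec_singleton carrier_matD)
  qed
  finally show "pin_rho d x $$ (i, j) = R $$ (i, j)" .
qed

lemma pin_rho_twisted_adjoint: assumes "x \<in> Pin d" shows "twisted_adjoint d x (pin_rho d x)"
proof -
  obtain R where "twisted_adjoint d x R" using twisted_adjoint_exists[OF assms] by blast
  moreover then have "pin_rho d x = R" by (rule pin_rho_eqI)
  ultimately show ?thesis by simp
qed

lemma pin_rho_carrier: "x \<in> Pin d \<Longrightarrow> pin_rho d x \<in> carrier_mat d d"
  using pin_rho_twisted_adjoint twisted_adjoint_def by blast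

lemma pin_rho_action: "x \<in> Pin d \<Longrightarrow> w \<in> carrier_vec d \<Longrightarrow>
   cl_mult d (cl_mult d (cl_alpha x) (cl_vec d w)) (cl_inv d x) = cl_vec d (pin_rho d x *\<^sub>v w)"
  using pin_rho_twisted_adjoint twisted_adjoint_def by blast

lemma pin_rho_mult: assumes x: "x \<in> Pin d" and y: "y \<in> Pin d"
  shows "pin_rho d (cl_mult d x y) = pin_rho d x * pin_rho d y"
proof (rule pin_rho_eqI, unfold twisted_adjoint_def, intro conjI ballI)
  show "pin_rho d x * pin_rho d y \<in> carrier_mat d d"
    using pin_rho_carrier[OF x] pin_rho_carrier[OF y] by auto
  fix w :: "real vec" assume w: "w \<in> carrier_vec d"
  have yw: "pin_rho d y *\<^sub>v w \<in> carrier_vec d" using pin_rho_carrier[OF y] w by auto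
  have "cl_mult d (cl_mult d (cl_alpha (cl_mult d x y)) (cl_vec d w)) (cl_inv d (cl_mult d x y))
     = cl_mult d (cl_mult d (cl_alpha x) (cl_mult d (cl_mult d (cl_alpha y) (cl_vec d w)) (cl_inv d y))) (cl_inv d x)"
    unfolding cl_inv_mult[OF x y] cl_alpha_mult by (simp only: cl_mult_assoc)
  also have "\<dots> = cl_mult d (cl_mult d (cl_alpha x) (cl_vec d (pin_rho d y *\<^sub>v w))) (cl_inv d x)"
    by (simp only: pin_rho_action[OF y w])
  also have "\<dots> = cl_vec d (pin_rho d x *\<^sub>v (pin_rho d y *\<^sub>v w))"
    by (rule pin_rho_action[OF x yw])
  also have "\<dots> = cl_vec d ((pin_rho d x * pin_rho d y) *\<^sub>v w)"
    using pin_rho_carrier[OF x] pin_rho_carrier[OF y] w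
    by (simp add: assoc_mult_mat_vec[of _ d d])
  finally show "cl_mult d (cl_mult d (cl_alpha (cl_mult d x y)) (cl_vec d w)) (cl_inv d (cl_mult d x y))
     = cl_vec d ((pin_rho d x * pin_rho d y) *\<^sub>v w)" .
qed

lemma pin_rho_one: "pin_rho d cl_one = 1\<^sub>m d"
  by (rule pin_rho_eqI) (auto simp: twisted_adjoint_def cl_inv_one cl_mult_one_left cl_mult_one_right)

lemma pin_rho_cl_vec: assumes u: "normalized_vec d u" shows "pin_rho d (cl_vec d u) = reflection_mat d u"
proof (rule pin_rho_eqI, unfold twisted_adjoint_def, intro conjI ballI)
  show "reflection_mat d u \<in> carrier_mat d d" by simp
  fix w :: "real vec" assume w: "w \<in> carrier_vec d"
  have "cl_mult d (cl_mult d (cl_alpha (cl_vec d u)) (cl_vec d w)) (cl_inv d (cl_vec d u))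
     = cl_mult d (cl_mult d (cl_vec d u) (cl_vec d w)) (cl_vec d u)"
    unfolding cl_alpha_vec cl_inv_vec[OF u] by (simp add: cl_mult_scale_left cl_mult_scale_right)
  also have "\<dots> = cl_vec d (reflection_mat d u *\<^sub>v w)"
    using u w by (simp add: cl_vec_reflect reflection_mat_mult_vec normalized_vec_def)
  finally show "cl_mult d (cl_mult d (cl_alpha (cl_vec d u)) (cl_vec d w)) (cl_inv d (cl_vec d u))
    = cl_vec d (reflection_mat d u *\<^sub>v w)" .
qed

lemma cl_vec_unit_vec: "j < d \<Longrightarrow> cl_vec d (unit_vec d j) S = (if S = {j} then 1 else 0)"
  by (auto simp: cl_vec_def split: if_splits)

lemma cl_mult_unit_vec_right: assumes j: "j < d" and C: "C \<subseteq> {0..<d}"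
  shows "cl_mult d y (cl_vec d (unit_vec d j)) C = cl_sign (symd C {j}) {j} * y (symd C {j})"
proof -
  have "cl_mult d y (cl_vec d (unit_vec d j)) C =
     (\<Sum>A\<in>Pow {0..<d}. if A = symd C {j} then cl_sign A {j} * y A else 0)"
    unfolding cl_mult_apply[OF C]
  proof (rule sum.cong[OF refl])
    fix A
    have "symd A C = {j} \<longleftrightarrow> A = symd C {j}" by blast
    then show "cl_sign A (symd A C) * y A * cl_vec d (unit_vec d j) (symd A C) =
       (if A = symd C {j} then cl_sign A {j} * y A else 0)"
      using j by (auto simp: cl_vec_unit_vec)
  qed
  also have "\<dots> = cl_sign (symd C {j}) {j} * y (symd C {j})"
    using j C by (subst sum.delta) auto
  finally show ?thesis .
qed

lemma cl_mult_unit_vec_left: assumes j: "j < d" and C: "C \<subseteq> {0..<d}"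
  shows "cl_mult d (cl_vec d (unit_vec d j)) y C = cl_sign {j} (symd {j} C) * y (symd {j} C)"
proof -
  have "cl_mult d (cl_vec d (unit_vec d j)) y C =
     (\<Sum>A\<in>Pow {0..<d}. if A = {j} then cl_sign A (symd A C) * y (symd A C) else 0)"
    unfolding cl_mult_apply[OF C]
    by (rule sum.cong[OF refl]) (use j in \<open>auto simp: cl_vec_unit_vec\<close>)
  also have "\<dots> = cl_sign {j} (symd {j} C) * y (symd {j} C)"
    using j by (subst sum.delta) auto
  finally show ?thesis .
qed

lemma inversions_singleton_right: "inversions S {j} = card {a\<in>S. j < a}"
proof -
  have "{(a, b). a \<in> S \<and> b \<in> {j} \<and> b < a} = (\<lambda>a. (a, j)) ` {a\<in>S. j < a}" by auto
  then show ?thesis unfolding inversions_def by (simp add: card_image inj_on_def)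
qed

lemma inversions_singleton_left: "inversions {j} S = card {a\<in>S. a < j}"
proof -
  have "{(a, b). a \<in> {j} \<and> b \<in> S \<and> b < a} = (\<lambda>b. (j, b)) ` {a\<in>S. a < j}" by auto
  then show ?thesis unfolding inversions_def by (simp add: card_image inj_on_def)
qed

lemma cl_sign_singleton_swap: assumes "finite S" "j \<in> S"
  shows "(-1) ^ card S * cl_sign S {j} = - cl_sign {j} S"
proof -
  let ?L = "{a\<in>S. a < j}" and ?G = "{a\<in>S. j < a}"
  have Sj: "S = insert j (?L \<union> ?G)" using assms by auto
  have fin: "finite (?L \<union> ?G)" using assms by auto
  have nj: "j \<notin> ?L \<union> ?G" by auto
  have "card (?L \<union> ?G) = card ?L + card ?G"
    by (rule card_Un_disjoint) (use assms in auto)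
  then have cS: "card S = card ?L + card ?G + 1"
    using Sj card_insert_disjoint[OF fin nj] by simp
  have s1: "cl_sign S {j} = (-1) ^ (card ?G + 1)"
    using assms by (simp add: cl_sign_inversions inversions_singleton_right)
  have s2: "cl_sign {j} S = (-1) ^ (card ?L + 1)"
    using assms by (simp add: cl_sign_inversions inversions_singleton_left)
  have "(-1::real) ^ (card S + (card ?G + 1)) = (-1) ^ (card ?L + 2)"
    by (rule neg_one_power_cong[where X = 0 and Y = "card ?G"]) (simp add: cS)
  then show ?thesis by (simp add: s1 s2 power_add)
qed

lemma twisted_central_imp_scalar: assumes x: "x \<in> cl_carrier d"
  and comm: "\<And>j. j < d \<Longrightarrow> cl_mult d (cl_alpha x) (cl_vec d (unit_vec d j)) = cl_mult d (cl_vec d (unit_vec d j)) x"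
  shows "x = cl_scale (x {}) cl_one"
proof
  fix S show "x S = cl_scale (x {}) cl_one S"
  proof (cases "S \<subseteq> {0..<d}")
    case False then show ?thesis using x cl_carrierD[OF x False] by (auto simp: cl_scale_def cl_one_def)
  next
    case True
    show ?thesis
    proof (cases "S = {}")
      case True then show ?thesis by (simp add: cl_scale_def cl_one_def)
    next
      case False
      then obtain j where jS: "j \<in> S" by blast
      with True have j: "j < d" by auto
      have fin: "finite S" using True finite_subset by blast
      let ?C = "symd S {j}"
      have C: "?C \<subseteq> {0..<d}" using True j by auto
      have e1: "symd ?C {j} = S" "symd {j} ?C = S" by blast+
      have "cl_mult d (cl_alpha x) (cl_vec d (unit_vec d j)) ?C = cl_mult d (cl_vec d (unit_vec d j)) x ?C"
        using comm[OF j] by simp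
      then have "cl_sign S {j} * ((-1) ^ card S * x S) = cl_sign {j} S * x S"
        unfolding cl_mult_unit_vec_right[OF j C] cl_mult_unit_vec_left[OF j C] e1 by (simp add: cl_alpha_def)
      then have "- cl_sign {j} S * x S = cl_sign {j} S * x S"
        using cl_sign_singleton_swap[OF fin jS] by (simp add: mult_ac)
      moreover have "cl_sign {j} S \<noteq> 0" by (simp add: cl_sign_def)
      ultimately have "x S = 0" by simp
      then show ?thesis using False by (simp add: cl_scale_def cl_one_def)
    qed
  qed
qed

text \<open>Left multiplication by a unit vector is skew for the coefficientwise inner product and squares
  to \<open>-1\<close>, hence is an isometry. So elements of \<open>Pin\<close> have norm 1, which leaves \<open>\<plusminus>1\<close> as the only
  scalars in \<open>Pin\<close>.\<close>

definition cl_inner :: "nat \<Rightarrow> cl \<Rightarrow> cl \<Rightarrow> real" where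
  "cl_inner d x y = (\<Sum>S\<in>Pow {0..<d}. x S * y S)"

lemma cl_mult_cl_vec_left: assumes C: "C \<subseteq> {0..<d}"
  shows "cl_mult d (cl_vec d u) x C = (\<Sum>i<d. u $ i * (cl_sign {i} (symd {i} C) * x (symd {i} C)))"
proof -
  have "cl_mult d (cl_vec d u) x C = (\<Sum>A\<in>Pow {0..<d}. cl_vec d u A * (cl_sign A (symd A C) * x (symd A C)))"
    unfolding cl_mult_apply[OF C] by (simp add: mult_ac)
  then show ?thesis by (simp add: sum_Pow_cl_vec)
qed

lemma cl_sign_singleton_symd: assumes "finite C"
  shows "cl_sign {i} C = - cl_sign {i} (symd {i} C)"
proof -
  have L: "{a \<in> symd {i} C. a < i} = {a\<in>C. a < i}" by auto
  have I: "inversions {i} (symd {i} C) = inversions {i} C" unfolding inversions_singleton_left L ..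
  show ?thesis
  proof (cases "i \<in> C")
    case True
    then have a: "{i} \<inter> C = {i}" "{i} \<inter> symd {i} C = {}" by auto
    show ?thesis unfolding cl_sign_inversions I unfolding a by simp
  next
    case False
    then have a: "{i} \<inter> C = {}" "{i} \<inter> symd {i} C = {i}" by auto
    show ?thesis unfolding cl_sign_inversions I unfolding a by simp
  qed
qed

lemma sum_Pow_cl_sign_singleton_skew:
  assumes i: "i < d"
  shows "(\<Sum>C\<in>Pow {0..<d}. cl_sign {i} (symd {i} C) * x (symd {i} C) * y C)
    = - (\<Sum>C\<in>Pow {0..<d}. x C * (cl_sign {i} (symd {i} C) * y (symd {i} C)))"
proof -
  have "(\<Sum>C\<in>Pow {0..<d}. x C * (cl_sign {i} (symd {i} C) * y (symd {i} C)))
     = (\<Sum>C\<in>Pow {0..<d}. x (symd {i} C) * (cl_sign {i} (symd {i} (symd {i} C)) * y (symd {i} (symd {i} C))))"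
    using i by (intro sum_Pow_symd_reindex) auto
  also have "\<dots> = (\<Sum>C\<in>Pow {0..<d}. - (cl_sign {i} (symd {i} C) * x (symd {i} C) * y C))"
  proof (rule sum.cong[OF refl])
    fix C assume "C \<in> Pow {0..<d}"
    then have "finite C" using finite_subset[of C "{0..<d}"] by auto
    then show "x (symd {i} C) * (cl_sign {i} (symd {i} (symd {i} C)) * y (symd {i} (symd {i} C))) =
      - (cl_sign {i} (symd {i} C) * x (symd {i} C) * y C)"
      unfolding symd_symd using cl_sign_singleton_symd[of C i] by (simp add: mult_ac)
  qed
  finally show ?thesis by (simp add: sum_negf)
qed

lemma cl_inner_cl_vec_skew: "cl_inner d (cl_mult d (cl_vec d u) x) y = - cl_inner d x (cl_mult d (cl_vec d u) y)"
proof -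
  let ?P = "Pow {0..<d}"
  have "cl_inner d (cl_mult d (cl_vec d u) x) y =
     (\<Sum>C\<in>?P. \<Sum>i<d. u $ i * (cl_sign {i} (symd {i} C) * x (symd {i} C) * y C))"
    unfolding cl_inner_def by (rule sum.cong[OF refl]) (auto simp: cl_mult_cl_vec_left sum_distrib_left sum_distrib_right mult_ac)
  also have "\<dots> = (\<Sum>i<d. u $ i * (\<Sum>C\<in>?P. cl_sign {i} (symd {i} C) * x (symd {i} C) * y C))"
    by (subst sum.swap) (simp add: sum_distrib_left)
  also have "\<dots> = (\<Sum>i<d. - (u $ i * (\<Sum>C\<in>?P. x C * (cl_sign {i} (symd {i} C) * y (symd {i} C)))))"
  proof (rule sum.cong[OF refl])
    fix i assume "i \<in> {..<d}"
    then show "u $ i * (\<Sum>C\<in>?P. cl_sign {i} (symd {i} C) * x (symd {i} C) * y C) =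
      - (u $ i * (\<Sum>C\<in>?P. x C * (cl_sign {i} (symd {i} C) * y (symd {i} C))))"
      using sum_Pow_cl_sign_singleton_skew[of i d x y] by simp
  qed
  also have "\<dots> = - (\<Sum>i<d. u $ i * (\<Sum>C\<in>?P. x C * (cl_sign {i} (symd {i} C) * y (symd {i} C))))"
    by (simp add: sum_negf)
  also have "(\<Sum>i<d. u $ i * (\<Sum>C\<in>?P. x C * (cl_sign {i} (symd {i} C) * y (symd {i} C))))
     = (\<Sum>C\<in>?P. \<Sum>i<d. u $ i * (x C * (cl_sign {i} (symd {i} C) * y (symd {i} C))))"
    by (subst sum.swap) (simp add: sum_distrib_left)
  also have "\<dots> = cl_inner d x (cl_mult d (cl_vec d u) y)"
    unfolding cl_inner_def by (rule sum.cong[OF refl]) (auto simp: cl_mult_cl_vec_left sum_distrib_left mult_ac)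
  finally show ?thesis .
qed

lemma cl_inner_scale_right: "cl_inner d x (cl_scale c y) = c * cl_inner d x y"
  by (simp add: cl_inner_def cl_scale_def sum_distrib_left mult_ac)

lemma cl_inner_normalized_vec_mult: assumes u: "normalized_vec d u" and x: "x \<in> cl_carrier d"
  shows "cl_inner d (cl_mult d (cl_vec d u) x) (cl_mult d (cl_vec d u) x) = cl_inner d x x"
proof -
  have "cl_inner d (cl_mult d (cl_vec d u) x) (cl_mult d (cl_vec d u) x) =
      - cl_inner d x (cl_mult d (cl_vec d u) (cl_mult d (cl_vec d u) x))"
    by (rule cl_inner_cl_vec_skew)
  also have "cl_mult d (cl_vec d u) (cl_mult d (cl_vec d u) x) = cl_scale (-1) x"
    unfolding cl_mult_assoc[symmetric] cl_vec_square[OF u] cl_mult_scale_left cl_mult_one_left[OF x] ..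
  finally show ?thesis by (simp add: cl_inner_scale_right)
qed

lemma Pin_cl_inner_self: "x \<in> Pin d \<Longrightarrow> cl_inner d x x = 1"
proof (induction rule: Pin.induct)
  case Pin_one
  have "cl_inner d cl_one cl_one = (\<Sum>S\<in>Pow {0..<d}. if S = {} then 1 else 0)"
    unfolding cl_inner_def by (rule sum.cong) (auto simp: cl_one_def)
  also have "\<dots> = 1" by (subst sum.delta) auto
  finally show ?case .
next
  case (Pin_mult v x)
  then show ?case using cl_inner_normalized_vec_mult[of d v x] Pin_carrier[of x d] by (simp add: normalized_vec_def)
qed

lemma pin_rho_kernel: assumes x: "x \<in> Pin d" and r: "pin_rho d x = 1\<^sub>m d"
  shows "x = cl_one \<or> x = cl_scale (-1) cl_one"
proof -
  have xc: "x \<in> cl_carrier d" by (rule Pin_carrier[OF x])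
  note xi = cl_inv_Pin[OF x]
  have comm: "cl_mult d (cl_alpha x) (cl_vec d (unit_vec d j)) = cl_mult d (cl_vec d (unit_vec d j)) x"
    if j: "j < d" for j
  proof -
    have "cl_mult d (cl_mult d (cl_alpha x) (cl_vec d (unit_vec d j))) (cl_inv d x) = cl_vec d (unit_vec d j)"
      using pin_rho_action[OF x, of "unit_vec d j"] r by simp
    then have "cl_mult d (cl_mult d (cl_mult d (cl_alpha x) (cl_vec d (unit_vec d j))) (cl_inv d x)) x
        = cl_mult d (cl_vec d (unit_vec d j)) x" by simp
    then show ?thesis using xi xc by (simp add: cl_mult_assoc cl_mult_one_right)
  qed
  have xs: "x = cl_scale (x {}) cl_one" by (rule twisted_central_imp_scalar[OF xc comm])
  have "cl_inner d x x = x {} * x {}"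
  proof -
    have "cl_inner d x x = (\<Sum>S\<in>Pow {0..<d}. if S = {} then x {} * x {} else 0)"
      unfolding cl_inner_def by (rule sum.cong[OF refl]) (subst (1 2) xs, simp add: cl_scale_def cl_one_def)
    also have "\<dots> = x {} * x {}" by (subst sum.delta) auto
    finally show ?thesis .
  qed
  with Pin_cl_inner_self[OF x] have "x {} * x {} = 1" by simp
  then have "x {} = 1 \<or> x {} = -1"
    using square_eq_1_iff by blast
  then show ?thesis using xs by auto
qed

lemma pin_rho_eq_imp_sign: assumes x: "x \<in> Pin d" and y: "y \<in> Pin d" and r: "pin_rho d x = pin_rho d y"
  shows "x = y \<or> x = cl_scale (-1) y"
proof -
  note yi = cl_inv_Pin[OF y]
  let ?z = "cl_mult d x (cl_inv d y)"
  have z: "?z \<in> Pin d" by (rule Pin_mult_closed[OF x yi(1)])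
  have "pin_rho d ?z = pin_rho d (cl_mult d y (cl_inv d y))"
    using pin_rho_mult[OF x yi(1)] pin_rho_mult[OF y yi(1)] r by simp
  also have "\<dots> = 1\<^sub>m d" using yi pin_rho_one by simp
  finally have "?z = cl_one \<or> ?z = cl_scale (-1) cl_one" by (rule pin_rho_kernel[OF z])
  moreover have "x = cl_mult d ?z y"
    using yi Pin_carrier[OF x] by (simp add: cl_mult_assoc cl_mult_one_right)
  ultimately show ?thesis using Pin_carrier[OF y] by (auto simp: cl_mult_one_left cl_mult_scale_left)
qed

lemma Pin_nonzero: "x \<in> Pin d \<Longrightarrow> x \<noteq> (\<lambda>S. 0)"
  using Pin_cl_inner_self[of x d] by (auto simp: cl_inner_def)

lemma Pin_idem_eq_one:
  assumes x: "x \<in> Pin d" and idem: "cl_mult d x x = x"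
  shows "x = cl_one"
proof -
  note xi = cl_inv_Pin[OF x]
  have "cl_one = cl_mult d (cl_inv d x) (cl_mult d x x)" using xi idem by simp
  also have "\<dots> = x" using xi Pin_carrier[OF x] by (simp add: cl_mult_assoc[symmetric] cl_mult_one_left)
  finally show ?thesis by simp
qed

lemma cl_scale_neg_one_power_eq_iff:
  assumes "z \<in> Pin d"
  shows "cl_scale ((-1) ^ e) z = z \<longleftrightarrow> even e"
proof
  assume h: "cl_scale ((-1) ^ e) z = z"
  obtain S where S: "z S \<noteq> 0" using Pin_nonzero[OF assms] by blast
  have "(-1) ^ e * z S = z S" using fun_cong[OF h, of S] by (simp add: cl_scale_def)
  then have "(-1::real) ^ e = 1" using S by simp
  then show "even e" using neg_one_odd_power[of e] by (cases "even e") auto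
qed (simp add: cl_scale_def)

lemma pin_rho_eq_imp_scale:
  assumes "x \<in> Pin d" "y \<in> Pin d" "pin_rho d x = pin_rho d y"
  obtains s where "s * s = 1" "x = cl_scale s y"
proof -
  consider "x = y" | "x = cl_scale (-1) y" using pin_rho_eq_imp_sign[OF assms] by blast
  then show thesis
  proof cases
    case 1
    then show thesis using that[of 1] by simp
  next
    case 2
    then show thesis using that[of "-1"] by simp
  qed
qed

lemma Pin_commutation_sign_unique:
  assumes x: "x \<in> Pin d" "x0 \<in> Pin d" "pin_rho d x = pin_rho d x0"
    and y: "y \<in> Pin d" "y0 \<in> Pin d" "pin_rho d y = pin_rho d y0"
    and comm: "cl_mult d x0 y0 = cl_scale c (cl_mult d y0 x0)"
  shows "cl_mult d x y = cl_scale c (cl_mult d y x)"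
proof -
  obtain s where s: "x = cl_scale s x0" using pin_rho_eq_imp_scale[OF x] .
  obtain t where t: "y = cl_scale t y0" using pin_rho_eq_imp_scale[OF y] .
  show ?thesis
    unfolding s t by (simp add: cl_mult_scale_left cl_mult_scale_right comm mult_ac)
qed

section \<open>Products of orthonormal vectors\<close>

definition orthonormal_on :: "nat \<Rightarrow> ('i \<Rightarrow> real vec) \<Rightarrow> 'i set \<Rightarrow> bool" where
  "orthonormal_on d P K \<longleftrightarrow> (\<forall>k\<in>K. P k \<in> carrier_vec d) \<and>
     (\<forall>a\<in>K. \<forall>b\<in>K. P a \<bullet> P b = (if a = b then 1 else 0))"

lemma orthonormal_on_subset: "orthonormal_on d P K \<Longrightarrow> L \<subseteq> K \<Longrightarrow> orthonormal_on d P L"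
  unfolding orthonormal_on_def by blast

definition reflections_mat :: "nat \<Rightarrow> ('i \<Rightarrow> real vec) \<Rightarrow> 'i set \<Rightarrow> real mat" where
  "reflections_mat d P K = mat d d (\<lambda>(i, j). (if i = j then 1 else 0) - 2 * (\<Sum>k\<in>K. P k $ i * P k $ j))"

lemma reflection_mat_mult_reflections_mat:
  assumes "orthonormal_on d P (insert k K)" "k \<notin> K" "finite K"
  shows "reflection_mat d (P k) * reflections_mat d P K = reflections_mat d P (insert k K)"
proof (rule eq_matI)
  fix i j assume "i < dim_row (reflections_mat d P (insert k K))" "j < dim_col (reflections_mat d P (insert k K))"
  then have i: "i < d" and j: "j < d" by (auto simp: reflections_mat_def)
  let ?S = "\<lambda>l j. \<Sum>k\<in>K. P k $ l * P k $ j"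
  have orth: "(\<Sum>l<d. P k $ l * P k' $ l) = 0" if "k' \<in> K" for k'
  proof -
    have "P k \<bullet> P k' = 0" "P k' \<in> carrier_vec d" using assms that by (auto simp: orthonormal_on_def)
    then show ?thesis by (simp add: scalar_prod_def atLeast0LessThan)
  qed
  have PS: "(\<Sum>l<d. P k $ l * ?S l j) = 0"
  proof -
    have "(\<Sum>l<d. P k $ l * ?S l j) = (\<Sum>k'\<in>K. (\<Sum>l<d. P k $ l * P k' $ l) * P k' $ j)"
      by (simp add: sum_distrib_left sum_distrib_right mult_ac) (rule sum.swap)
    then show ?thesis using orth by simp
  qed
  have "(reflection_mat d (P k) * reflections_mat d P K) $$ (i, j)
     = (\<Sum>l<d. ((if i = l then 1 else 0) - 2 * P k $ i * P k $ l) * ((if l = j then 1 else 0) - 2 * ?S l j))"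
    using i j by (simp add: reflection_mat_def reflections_mat_def scalar_prod_def atLeast0LessThan)
  also have "\<dots> = (\<Sum>l<d. (if i = l then 1 else 0) * ((if l = j then 1 else 0) - 2 * ?S l j))
      - 2 * P k $ i * (\<Sum>l<d. P k $ l * (if l = j then 1 else 0))
      + 4 * P k $ i * (\<Sum>l<d. P k $ l * ?S l j)"
    by (simp add: algebra_simps sum.distrib sum_subtractf sum_distrib_left)
  also have "\<dots> = (if i = j then 1 else 0) - 2 * (\<Sum>k\<in>insert k K. P k $ i * P k $ j)"
    unfolding sum_delta_left[OF i] sum_delta_right[OF j] PS using assms(2,3) by simp
  finally show "(reflection_mat d (P k) * reflections_mat d P K) $$ (i, j) = reflections_mat d P (insert k K) $$ (i, j)"
    using i j by (simp add: reflections_mat_def)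
qed (auto simp: reflection_mat_def reflections_mat_def)

fun cl_prod :: "nat \<Rightarrow> ('i \<Rightarrow> cl) \<Rightarrow> 'i list \<Rightarrow> cl" where
  "cl_prod d f [] = cl_one"
| "cl_prod d f (k # ks) = cl_mult d (f k) (cl_prod d f ks)"

lemma cl_prod_carrier[simp]: "cl_prod d f ks \<in> cl_carrier d"
  by (cases ks) auto

lemma cl_prod_Pin: "(\<forall>k\<in>set ks. normalized_vec d (P k)) \<Longrightarrow> cl_prod d (\<lambda>k. cl_vec d (P k)) ks \<in> Pin d"
  by (induction ks) (auto simp: normalized_vec_def intro: Pin.intros)

definition anticommuting_on :: "nat \<Rightarrow> ('i \<Rightarrow> cl) \<Rightarrow> 'i set \<Rightarrow> bool" where
  "anticommuting_on d f K \<longleftrightarrow> (\<forall>k\<in>K. f k \<in> cl_carrier d) \<and>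
     (\<forall>a\<in>K. \<forall>b\<in>K. a \<noteq> b \<longrightarrow> cl_mult d (f a) (f b) = cl_scale (-1) (cl_mult d (f b) (f a)))"

lemma anticommuting_on_carrier: "anticommuting_on d f K \<Longrightarrow> k \<in> K \<Longrightarrow> f k \<in> cl_carrier d"
  unfolding anticommuting_on_def by blast

lemma anticommuting_onD:
  "anticommuting_on d f K \<Longrightarrow> a \<in> K \<Longrightarrow> b \<in> K \<Longrightarrow> a \<noteq> b \<Longrightarrow>
     cl_mult d (f a) (f b) = cl_scale (-1) (cl_mult d (f b) (f a))"
  unfolding anticommuting_on_def by blast

lemma cl_prod_commute_factor:
  assumes anti: "anticommuting_on d f K" and ks: "distinct ks" "set ks \<subseteq> K" and j: "j \<in> K"
  shows "cl_mult d (cl_prod d f ks) (f j) =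
     cl_scale ((-1) ^ (length ks + of_bool (j \<in> set ks))) (cl_mult d (f j) (cl_prod d f ks))"
  using ks
proof (induction ks)
  case Nil
  then show ?case
    using anticommuting_on_carrier[OF anti j] by (simp add: cl_mult_one_left cl_mult_one_right)
next
  case (Cons k ks)
  then have k: "k \<notin> set ks" "k \<in> K" by auto
  let ?e = "length ks + of_bool (j \<in> set ks)"
  have "cl_mult d (cl_prod d f (k # ks)) (f j) = cl_mult d (f k) (cl_mult d (cl_prod d f ks) (f j))"
    by (simp add: cl_mult_assoc)
  also have "\<dots> = cl_scale ((-1) ^ ?e) (cl_mult d (cl_mult d (f k) (f j)) (cl_prod d f ks))"
    using Cons by (simp add: cl_mult_scale_right cl_mult_assoc)
  also have "\<dots> = cl_scale ((-1) ^ (length (k # ks) + of_bool (j \<in> set (k # ks))))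
      (cl_mult d (f j) (cl_prod d f (k # ks)))"
  proof (cases "k = j")
    case False
    then have "cl_mult d (f k) (f j) = cl_scale (-1) (cl_mult d (f j) (f k))"
      using anticommuting_onD[OF anti k(2) j] by blast
    then show ?thesis using False by (simp add: cl_mult_scale_left cl_mult_assoc mult.commute)
  qed (use k in \<open>simp add: cl_mult_assoc\<close>)
  finally show ?case .
qed

text \<open>Each pair of distinct factors contributes a sign; there are \<open>|ks| |ls| - |ks \<inter> ls|\<close> such pairs,
  which has the parity of the exponent below.\<close>

lemma cl_prod_commute:
  assumes anti: "anticommuting_on d f K" and ks: "distinct ks" "set ks \<subseteq> K"
    and ls: "distinct ls" "set ls \<subseteq> K"
  shows "cl_mult d (cl_prod d f ks) (cl_prod d f ls) =
     cl_scale ((-1) ^ (length ks * length ls + card (set ks \<inter> set ls))) (cl_mult d (cl_prod d f ls) (cl_prod d f ks))"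
  using ls
proof (induction ls)
  case Nil
  then show ?case by (simp add: cl_mult_one_left cl_mult_one_right)
next
  case (Cons j ls)
  then have j: "j \<notin> set ls" "j \<in> K" by auto
  have card: "card (set ks \<inter> set (j # ls)) = card (set ks \<inter> set ls) + of_bool (j \<in> set ks)"
    using j by (cases "j \<in> set ks") (auto simp: insert_absorb)
  have "cl_mult d (cl_prod d f ks) (cl_prod d f (j # ls)) = cl_mult d (cl_mult d (cl_prod d f ks) (f j)) (cl_prod d f ls)"
    by (simp add: cl_mult_assoc)
  also have "\<dots> = cl_scale ((-1) ^ (length ks + of_bool (j \<in> set ks)))
       (cl_mult d (f j) (cl_mult d (cl_prod d f ks) (cl_prod d f ls)))"
    by (simp only: cl_prod_commute_factor[OF anti ks j(2)] cl_mult_scale_left cl_mult_assoc)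
  also have "\<dots> = cl_scale ((-1) ^ (length ks + of_bool (j \<in> set ks)) *
        (-1) ^ (length ks * length ls + card (set ks \<inter> set ls)))
       (cl_mult d (cl_prod d f (j # ls)) (cl_prod d f ks))"
    using Cons by (simp add: cl_mult_scale_right cl_mult_assoc)
  also have "(-1::real) ^ (length ks + of_bool (j \<in> set ks)) *
        (-1) ^ (length ks * length ls + card (set ks \<inter> set ls)) =
      (-1) ^ (length ks * length (j # ls) + card (set ks \<inter> set (j # ls)))"
    unfolding card by (simp add: power_add[symmetric] algebra_simps)
  finally show ?case .
qed

lemma pin_rho_cl_prod:
  assumes "orthonormal_on d P (set ks)" "distinct ks"
  shows "pin_rho d (cl_prod d (\<lambda>k. cl_vec d (P k)) ks) = reflections_mat d P (set ks)"
  using assms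
proof (induction ks)
  case Nil
  then show ?case by (auto simp: pin_rho_one reflections_mat_def)
next
  case (Cons k ks)
  then have k: "normalized_vec d (P k)" and ks: "orthonormal_on d P (set ks)"
    by (auto simp: orthonormal_on_def normalized_vec_def)
  have "cl_prod d (\<lambda>k. cl_vec d (P k)) ks \<in> Pin d"
    using ks by (intro cl_prod_Pin) (auto simp: orthonormal_on_def normalized_vec_def)
  then show ?case
    using Cons pin_rho_mult[OF Pin_cl_vec[OF k]] pin_rho_cl_vec[OF k] ks
    by (simp add: reflection_mat_mult_reflections_mat)
qed

lemma anticommuting_on_cl_vec:
  assumes "orthonormal_on d P K"
  shows "anticommuting_on d (\<lambda>k. cl_vec d (P k)) K"
  unfolding anticommuting_on_def
proof (intro conjI ballI impI)
  fix a b assume "a \<in> K" "b \<in> K" "a \<noteq> b"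
  then show "cl_mult d (cl_vec d (P a)) (cl_vec d (P b)) = cl_scale (-1) (cl_mult d (cl_vec d (P b)) (cl_vec d (P a)))"
    using assms by (intro cl_vec_orthogonal) (auto simp: orthonormal_on_def)
qed simp

section \<open>Orthogonal involutions\<close>

text \<open>Real \<open>d \<times> d\<close> matrices are represented here by functions \<open>nat \<Rightarrow> nat \<Rightarrow> real\<close>, of which only
  the entries below \<open>d\<close> matter; a family of vectors \<open>q\<close> has coordinates \<open>q a i\<close>.\<close>

definition sym_fun :: "nat \<Rightarrow> (nat \<Rightarrow> nat \<Rightarrow> real) \<Rightarrow> bool" where
  "sym_fun d e \<longleftrightarrow> (\<forall>i<d. \<forall>j<d. e i j = e j i)"

definition idem_fun :: "nat \<Rightarrow> (nat \<Rightarrow> nat \<Rightarrow> real) \<Rightarrow> bool" where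
  "idem_fun d e \<longleftrightarrow> (\<forall>i<d. \<forall>j<d. (\<Sum>k<d. e i k * e k j) = e i j)"

definition orthonormal_rows :: "nat \<Rightarrow> nat \<Rightarrow> (nat \<Rightarrow> nat \<Rightarrow> real) \<Rightarrow> bool" where
  "orthonormal_rows d m q \<longleftrightarrow> (\<forall>a<m. \<forall>b<m. (\<Sum>i<d. q a i * q b i) = (if a = b then 1 else 0))"

definition orthonormal_basis :: "nat \<Rightarrow> (nat \<Rightarrow> nat \<Rightarrow> real) \<Rightarrow> bool" where
  "orthonormal_basis d Q \<longleftrightarrow> orthonormal_rows d d Q \<and>
     (\<forall>i<d. \<forall>j<d. (\<Sum>a<d. Q a i * Q a j) = (if i = j then 1 else 0))"

definition orthonormal_decomp ::
  "nat \<Rightarrow> (nat \<Rightarrow> nat \<Rightarrow> real) \<Rightarrow> nat \<Rightarrow> (nat \<Rightarrow> nat \<Rightarrow> real) \<Rightarrow> bool" where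
  "orthonormal_decomp d e m q \<longleftrightarrow>
     orthonormal_rows d m q \<and> (\<forall>i<d. \<forall>j<d. e i j = (\<Sum>a<m. q a i * q a j))"

lemma orthonormal_decomp_fixes:
  assumes "orthonormal_decomp d e m q" "b < m" "i < d"
  shows "(\<Sum>j<d. e i j * q b j) = q b i"
proof -
  have "(\<Sum>j<d. e i j * q b j) = (\<Sum>j<d. \<Sum>a<m. q a i * (q a j * q b j))"
    using assms by (auto simp: orthonormal_decomp_def sum_distrib_right sum_distrib_left mult_ac intro!: sum.cong)
  also have "\<dots> = (\<Sum>a<m. q a i * (\<Sum>j<d. q a j * q b j))"
    by (subst sum.swap) (simp add: sum_distrib_left)
  also have "\<dots> = (\<Sum>a<m. q a i * (if a = b then 1 else 0))"
    using assms by (auto simp: orthonormal_decomp_def orthonormal_rows_def intro!: sum.cong)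
  also have "\<dots> = q b i" using assms(2) by (simp add: sum_delta_right)
  finally show ?thesis .
qed

lemma orthonormal_decomp_trace:
  assumes "orthonormal_decomp d e m q"
  shows "(\<Sum>i<d. e i i) = real m"
proof -
  have "(\<Sum>i<d. e i i) = (\<Sum>i<d. \<Sum>a<m. q a i * q a i)"
    using assms by (auto simp: orthonormal_decomp_def intro!: sum.cong)
  also have "\<dots> = (\<Sum>a<m. \<Sum>i<d. q a i * q a i)" by (rule sum.swap)
  also have "\<dots> = (\<Sum>a<m. 1)" using assms by (auto simp: orthonormal_decomp_def orthonormal_rows_def intro!: sum.cong)
  finally show ?thesis by simp
qed

lemma sym_idem_trace_eq_sum_squares:
  assumes "sym_fun d e" "idem_fun d e"
  shows "(\<Sum>i<d. e i i) = (\<Sum>i<d. \<Sum>k<d. e i k * e i k)"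
  using assms by (auto simp: sym_fun_def idem_fun_def intro!: sum.cong)

lemma sym_idem_trace_nonneg: "sym_fun d e \<Longrightarrow> idem_fun d e \<Longrightarrow> 0 \<le> (\<Sum>i<d. e i i)"
  by (simp add: sym_idem_trace_eq_sum_squares sum_nonneg)

lemma sym_idem_unit_fixed_vector:
  assumes sym: "sym_fun d e" and idem: "idem_fun d e" and "i0 < d" "k0 < d" "e i0 k0 \<noteq> 0"
  obtains v where "(\<Sum>i<d. v i * v i) = 1" "\<And>i. i < d \<Longrightarrow> (\<Sum>j<d. e i j * v j) = v i"
proof
  txt \<open>The witness is the normalised column \<open>k0\<close>.\<close>
  have sy: "\<And>i j. i < d \<Longrightarrow> j < d \<Longrightarrow> e i j = e j i" using sym by (simp add: sym_fun_def)
  have id: "\<And>i j. i < d \<Longrightarrow> j < d \<Longrightarrow> (\<Sum>k<d. e i k * e k j) = e i j"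
    using idem by (simp add: idem_fun_def)
  have c: "e k0 k0 = (\<Sum>i<d. e i k0 * e i k0)"
    using id[of k0 k0] sy \<open>k0 < d\<close> by (auto intro!: sum.cong)
  have "0 < e i0 k0 * e i0 k0" using \<open>e i0 k0 \<noteq> 0\<close> by (auto simp: zero_less_mult_iff linorder_neq_iff)
  also have "\<dots> \<le> (\<Sum>i<d. e i k0 * e i k0)" using \<open>i0 < d\<close> by (intro member_le_sum) auto
  finally have pos: "0 < e k0 k0" using c by simp
  define s where "s = sqrt (e k0 k0)"
  have s: "0 < s" "s * s = e k0 k0" using pos by (auto simp: s_def)
  have "(\<Sum>i<d. e i k0 / s * (e i k0 / s)) = (\<Sum>i<d. e i k0 * e i k0) / (s * s)"
    by (simp add: sum_divide_distrib)
  then show "(\<Sum>i<d. e i k0 / s * (e i k0 / s)) = 1" using c s pos by simp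
  fix i assume "i < d"
  have "(\<Sum>j<d. e i j * (e j k0 / s)) = (\<Sum>j<d. e i j * e j k0) / s"
    by (simp add: sum_divide_distrib)
  then show "(\<Sum>j<d. e i j * (e j k0 / s)) = e i k0 / s" using id[OF \<open>i < d\<close> \<open>k0 < d\<close>] by simp
qed

lemma sym_idem_remove_fixed_vector:
  assumes sym: "sym_fun d e" and idem: "idem_fun d e" and unit: "(\<Sum>i<d. v i * v i) = 1"
    and fixed: "\<And>i. i < d \<Longrightarrow> (\<Sum>j<d. e i j * v j) = v i"
  defines "e' \<equiv> \<lambda>i j. e i j - v i * v j"
  shows "sym_fun d e'" "idem_fun d e'" "(\<Sum>i<d. e' i i) = (\<Sum>i<d. e i i) - 1"
    "\<And>i. i < d \<Longrightarrow> (\<Sum>j<d. e' i j * v j) = 0"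
proof -
  have fixed': "(\<Sum>k<d. v k * e k j) = v j" if "j < d" for j
    using fixed[OF that] sym that by (auto simp: sym_fun_def mult.commute intro!: sum.cong)
  show "sym_fun d e'" using sym by (simp add: sym_fun_def e'_def mult.commute)
  show "idem_fun d e'"
    unfolding idem_fun_def
  proof (intro allI impI)
    fix i j assume i: "i < d" and j: "j < d"
    have "(\<Sum>k<d. e' i k * e' k j) = (\<Sum>k<d. e i k * e k j) - v i * (\<Sum>k<d. v k * e k j)
       - (\<Sum>k<d. e i k * v k) * v j + v i * v j * (\<Sum>k<d. v k * v k)"
      by (simp add: e'_def algebra_simps sum.distrib sum_subtractf sum_distrib_left sum_distrib_right)
    also have "\<dots> = e' i j"
      using idem i j fixed'[OF j] fixed[OF i] unit by (simp add: e'_def idem_fun_def)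
    finally show "(\<Sum>k<d. e' i k * e' k j) = e' i j" .
  qed
  show "(\<Sum>i<d. e' i i) = (\<Sum>i<d. e i i) - 1"
    using unit by (simp add: e'_def sum_subtractf)
  fix i assume "i < d"
  have "(\<Sum>j<d. e' i j * v j) = (\<Sum>j<d. e i j * v j) - v i * (\<Sum>j<d. v j * v j)"
    by (simp add: e'_def algebra_simps sum_subtractf sum_distrib_left)
  then show "(\<Sum>j<d. e' i j * v j) = 0" using fixed[OF \<open>i < d\<close>] unit by simp
qed

lemma orthonormal_decomp_add_vector:
  assumes dq: "orthonormal_decomp d e m q" and sym: "sym_fun d e" and unit: "(\<Sum>i<d. v i * v i) = 1"
    and kill: "\<And>i. i < d \<Longrightarrow> (\<Sum>j<d. e i j * v j) = 0"
  shows "orthonormal_decomp d (\<lambda>i j. e i j + v i * v j) (Suc m) (q(m := v))"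
proof -
  have sy: "\<And>i j. i < d \<Longrightarrow> j < d \<Longrightarrow> e i j = e j i" using sym by (simp add: sym_fun_def)
  have orth: "(\<Sum>i<d. v i * q b i) = 0" if b: "b < m" for b
  proof -
    have "(\<Sum>i<d. v i * q b i) = (\<Sum>i<d. v i * (\<Sum>j<d. e i j * q b j))"
      using orthonormal_decomp_fixes[OF dq b] by simp
    also have "\<dots> = (\<Sum>i<d. \<Sum>j<d. e j i * v i * q b j)"
      using sy by (auto simp: sum_distrib_left mult_ac intro!: sum.cong)
    also have "\<dots> = (\<Sum>j<d. (\<Sum>i<d. e j i * v i) * q b j)"
      by (subst sum.swap) (simp add: sum_distrib_right)
    also have "\<dots> = 0" using kill by simp
    finally show ?thesis .
  qed
  have "orthonormal_rows d (Suc m) (q(m := v))"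
    using dq unit orth unfolding orthonormal_decomp_def orthonormal_rows_def
    by (auto simp: less_Suc_eq mult.commute[of "q _ _" "v _"])
  then show ?thesis
    using dq by (simp add: orthonormal_decomp_def)
qed

lemma orthonormal_decomp_exists:
  assumes "sym_fun d e" "idem_fun d e"
  obtains m q where "orthonormal_decomp d e m q"
proof -
  have "\<exists>m q. orthonormal_decomp d e m q"
    if "sym_fun d e" "idem_fun d e" "(\<Sum>i<d. e i i) \<le> real t" for t e
    using that
  proof (induction t arbitrary: e rule: less_induct)
    case (less t)
    show ?case
    proof (cases "\<forall>i<d. \<forall>k<d. e i k = 0")
      case True
      then have "orthonormal_decomp d e 0 q" for q by (simp add: orthonormal_decomp_def orthonormal_rows_def)
      then show ?thesis by blast
    next
      case False
      then obtain i0 k0 where "i0 < d" "k0 < d" "e i0 k0 \<noteq> 0" by blast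
      then obtain v where v: "(\<Sum>i<d. v i * v i) = 1" "\<And>i. i < d \<Longrightarrow> (\<Sum>j<d. e i j * v j) = v i"
        using sym_idem_unit_fixed_vector[OF less.prems(1,2)] by blast
      define e' where "e' i j = e i j - v i * v j" for i j
      note e' = sym_idem_remove_fixed_vector[OF less.prems(1,2) v, folded e'_def]
      have "0 \<le> (\<Sum>i<d. e' i i)" using e' by (intro sym_idem_trace_nonneg)
      then have "1 \<le> t" using e'(3) less.prems(3) by linarith
      then have "t - 1 < t" "(\<Sum>i<d. e' i i) \<le> real (t - 1)" using e'(3) less.prems(3) by auto
      then obtain m q where "orthonormal_decomp d e' m q" using less.IH e'(1,2) by blast
      then have "orthonormal_decomp d (\<lambda>i j. e' i j + v i * v j) (Suc m) (q(m := v))"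
        using orthonormal_decomp_add_vector e'(1,4) v(1) by blast
      then show ?thesis by (auto simp: e'_def)
    qed
  qed
  moreover obtain t :: nat where "(\<Sum>i<d. e i i) \<le> real t" using real_arch_simple by blast
  ultimately show thesis using assms that by blast
qed

lemma sum_lessThan_add: "(\<Sum>a<m + (n::nat). f a) = (\<Sum>a<m. f a) + (\<Sum>a<n. f (m + a) :: 'a::comm_monoid_add)"
  by (induction n) (auto simp: add.assoc)

lemma orthonormal_decomps_complementary_orthogonal:
  assumes e: "orthonormal_decomp d e m q" and f: "orthonormal_decomp d f m' q'" and sym: "sym_fun d f"
    and compl: "\<And>i j. i < d \<Longrightarrow> j < d \<Longrightarrow> e i j + f i j = (if i = j then 1 else 0)"
    and ab: "a < m" "b < m'"
  shows "(\<Sum>i<d. q a i * q' b i) = 0"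
proof -
  have sy: "\<And>i j. i < d \<Longrightarrow> j < d \<Longrightarrow> f i j = f j i" using sym by (simp add: sym_fun_def)
  have kill: "(\<Sum>i<d. f j i * q a i) = 0" if j: "j < d" for j
  proof -
    have "f j i * q a i = (if j = i then 1 else 0) * q a i - e j i * q a i" if "i < d" for i
      using compl[OF j that] by (simp add: left_diff_distrib[symmetric] eq_diff_eq)
    then have "(\<Sum>i<d. f j i * q a i) = (\<Sum>i<d. (if j = i then 1 else 0) * q a i) - (\<Sum>i<d. e j i * q a i)"
      by (simp add: sum_subtractf[symmetric])
    then show ?thesis using orthonormal_decomp_fixes[OF e ab(1) j] j by (simp add: sum_delta_left)
  qed
  have "(\<Sum>i<d. q a i * q' b i) = (\<Sum>i<d. q a i * (\<Sum>j<d. f i j * q' b j))"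
    using orthonormal_decomp_fixes[OF f ab(2)] by simp
  also have "\<dots> = (\<Sum>i<d. \<Sum>j<d. f j i * q a i * q' b j)"
    using sy by (auto simp: sum_distrib_left mult_ac intro!: sum.cong)
  also have "\<dots> = (\<Sum>j<d. (\<Sum>i<d. f j i * q a i) * q' b j)"
    by (subst sum.swap) (simp add: sum_distrib_right)
  also have "\<dots> = 0" using kill by simp
  finally show ?thesis .
qed

lemma orthonormal_decomps_complementary:
  assumes e: "orthonormal_decomp d e m q" and f: "orthonormal_decomp d f m' q'" and sym: "sym_fun d f"
    and compl: "\<And>i j. i < d \<Longrightarrow> j < d \<Longrightarrow> e i j + f i j = (if i = j then 1 else 0)"
  shows "m + m' = d" "orthonormal_basis d (\<lambda>a. if a < m then q a else q' (a - m))"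
proof -
  have "real m + real m' = (\<Sum>i<d. e i i + f i i)"
    using orthonormal_decomp_trace[OF e] orthonormal_decomp_trace[OF f] by (simp add: sum.distrib)
  also have "\<dots> = real d" using compl by simp
  finally show md: "m + m' = d" by linarith
  note cross = orthonormal_decomps_complementary_orthogonal[OF e f sym compl]
  let ?Q = "\<lambda>a. if a < m then q a else q' (a - m)"
  have rows: "orthonormal_rows d d ?Q"
    unfolding orthonormal_rows_def
  proof (intro allI impI)
    fix a b assume a: "a < d" and b: "b < d"
    show "(\<Sum>i<d. ?Q a i * ?Q b i) = (if a = b then 1 else 0)"
    proof (cases "a < m"; cases "b < m")
      assume "a < m" "b < m" then show ?thesis using e by (simp add: orthonormal_decomp_def orthonormal_rows_def)
    next
      assume "a < m" "\<not> b < m" then show ?thesis using cross[of a "b - m"] b md by simp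
    next
      assume "\<not> a < m" "b < m" then show ?thesis using cross[of b "a - m"] a md by (simp add: mult.commute)
    next
      assume na: "\<not> a < m" and nb: "\<not> b < m"
      then have "a - m < m'" "b - m < m'" "(a - m = b - m) = (a = b)" using a b md by auto
      then show ?thesis using f na nb by (simp add: orthonormal_decomp_def orthonormal_rows_def)
    qed
  qed
  have "(\<Sum>a<d. ?Q a i * ?Q a j) = (if i = j then 1 else 0)" if "i < d" "j < d" for i j
  proof -
    have "(\<Sum>a<d. ?Q a i * ?Q a j) = (\<Sum>a<m. q a i * q a j) + (\<Sum>b<m'. q' b i * q' b j)"
      unfolding md[symmetric] sum_lessThan_add by simp
    also have "\<dots> = e i j + f i j"
      using e f that by (simp add: orthonormal_decomp_def)
    finally show ?thesis using compl that by simp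
  qed
  with rows show "orthonormal_basis d ?Q" by (simp add: orthonormal_basis_def)
qed

lemma orthogonal_involution_symmetric:
  fixes M :: "'a::comm_ring_1 mat"
  assumes M: "M \<in> carrier_mat d d" and orth: "transpose_mat M * M = 1\<^sub>m d" and inv: "M * M = 1\<^sub>m d"
  shows "transpose_mat M = M"
proof -
  have "transpose_mat M = transpose_mat M * (M * M)"
    using inv M right_mult_one_mat[of "transpose_mat M" d d] by simp
  also have "\<dots> = (transpose_mat M * M) * M" using M by (simp add: assoc_mult_mat[of _ d d _ d _ d])
  also have "\<dots> = M" using orth M by simp
  finally show ?thesis .
qed

text \<open>For a symmetric involution \<open>m\<close>, \<open>(1 - m)/2\<close> is the orthogonal projection onto its
  \<open>-1\<close>-eigenspace.\<close>

lemma sym_involution_half_idem: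
  assumes sy: "\<And>i j. i < d \<Longrightarrow> j < d \<Longrightarrow> m i j = m j i"
    and inv: "\<And>i j. i < d \<Longrightarrow> j < d \<Longrightarrow> (\<Sum>k<d. m i k * m k j) = (if i = j then 1 else 0)"
  defines "e \<equiv> \<lambda>i j. ((if i = j then 1 else 0) - m i j) / 2"
  shows "sym_fun d e" "idem_fun d e"
proof -
  show "sym_fun d e" using sy by (auto simp: sym_fun_def e_def)
  show "idem_fun d e"
    unfolding idem_fun_def
  proof (intro allI impI)
    fix i j assume i: "i < d" and j: "j < d"
    have "(\<Sum>k<d. e i k * e k j) = (\<Sum>k<d. ((if i = k then 1 else 0) - m i k) * ((if k = j then 1 else 0) - m k j)) / 4"
      by (simp add: e_def sum_divide_distrib)
    also have "\<dots> = ((\<Sum>k<d. (if i = k then 1 else 0) * (if k = j then 1 else 0)) - (\<Sum>k<d. (if i = k then 1 else 0) * m k j)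
        - (\<Sum>k<d. m i k * (if k = j then 1 else 0)) + (\<Sum>k<d. m i k * m k j)) / 4"
      by (simp add: algebra_simps sum.distrib sum_subtractf)
    also have "\<dots> = e i j"
      unfolding sum_delta_left[OF i] sum_delta_right[OF j] inv[OF i j] by (simp add: e_def)
    finally show "(\<Sum>k<d. e i k * e k j) = e i j" .
  qed
qed

text \<open>Decomposing the projections \<open>(1 \<mp> M)/2\<close> onto the two eigenspaces of \<open>M\<close> gives a basis
  adapted to \<open>M\<close>.\<close>

lemma orthogonal_involution_decomp:
  assumes M: "M \<in> carrier_mat d d" and orth: "transpose_mat M * M = 1\<^sub>m d" and inv: "M * M = 1\<^sub>m d"
  obtains Q g where "orthonormal_basis d Q" "g \<le> d" "real d - 2 * real g = (\<Sum>i<d. M $$ (i, i))"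
    "\<And>i j. i < d \<Longrightarrow> j < d \<Longrightarrow> M $$ (i, j) = (if i = j then 1 else 0) - 2 * (\<Sum>a<g. Q a i * Q a j)"
proof -
  have sy: "M $$ (i, j) = M $$ (j, i)" if "i < d" "j < d" for i j
    using arg_cong[OF orthogonal_involution_symmetric[OF M orth inv], of "\<lambda>A. A $$ (j, i)"] that M by simp
  have sq: "(\<Sum>k<d. M $$ (i, k) * M $$ (k, j)) = (if i = j then 1 else 0)" if "i < d" "j < d" for i j
    using arg_cong[OF inv, of "\<lambda>A. A $$ (i, j)"] that M by (simp add: scalar_prod_def atLeast0LessThan)
  define em where "em i j = ((if i = j then 1 else 0) - M $$ (i, j)) / 2" for i j
  define ep where "ep i j = ((if i = j then 1 else 0) - - M $$ (i, j)) / 2" for i j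
  have em: "sym_fun d em" "idem_fun d em"
    unfolding em_def by (rule sym_involution_half_idem; use sy sq in simp)+
  have ep: "sym_fun d ep" "idem_fun d ep"
    unfolding ep_def by (rule sym_involution_half_idem; use sy sq in simp)+
  obtain g q where dm: "orthonormal_decomp d em g q" using orthonormal_decomp_exists[OF em] .
  obtain g' q' where dp: "orthonormal_decomp d ep g' q'" using orthonormal_decomp_exists[OF ep] .
  have compl: "em i j + ep i j = (if i = j then 1 else 0)" for i j by (simp add: em_def ep_def field_simps)
  note basis = orthonormal_decomps_complementary[OF dm dp ep(1) compl]
  let ?Q = "\<lambda>a. if a < g then q a else q' (a - g)"
  show thesis
  proof (rule that[OF basis(2)])
    show "g \<le> d" using basis(1) by simp
    have "(\<Sum>i<d. em i i) = (real d - (\<Sum>i<d. M $$ (i, i))) / 2"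
      by (simp add: em_def sum_divide_distrib[symmetric] sum_subtractf)
    then show "real d - 2 * real g = (\<Sum>i<d. M $$ (i, i))"
      using orthonormal_decomp_trace[OF dm] by simp
    fix i j assume "i < d" "j < d"
    then have "em i j = (\<Sum>a<g. q a i * q a j)" using dm by (simp add: orthonormal_decomp_def)
    then show "M $$ (i, j) = (if i = j then 1 else 0) - 2 * (\<Sum>a<g. ?Q a i * ?Q a j)"
      by (simp add: em_def field_simps)
  qed
qed

section \<open>Kronecker products\<close>

lemma div_mod_less_mult:
  assumes "i < d * (d'::nat)"
  shows "i div d' < d" "i mod d' < d'"
  using assms by (cases "d' = 0"; auto simp: div_less_iff_less_mult)+

lemma sum_lessThan_mult_div_mod:
  fixes d d' :: nat
  shows "(\<Sum>k<d * d'. F (k div d') (k mod d')) = (\<Sum>a<d. \<Sum>b<d'. F a b :: 'a::comm_monoid_add)"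
proof -
  have "(\<Sum>k<d * d'. F (k div d') (k mod d')) = (\<Sum>(a, b)\<in>{..<d} \<times> {..<d'}. F a b)"
  proof (rule sum.reindex_bij_witness[where i = "\<lambda>(a, b). a * d' + b" and j = "\<lambda>k. (k div d', k mod d')"])
    fix ab assume "ab \<in> {..<d} \<times> {..<d'}"
    moreover obtain a b where "ab = (a, b)" by fastforce
    ultimately have "a < d" "b < d'" by auto
    moreover have "a * d' + b < (a + 1) * d'" using \<open>b < d'\<close> by simp
    moreover have "(a + 1) * d' \<le> d * d'" using \<open>a < d\<close> by (intro mult_right_mono) auto
    ultimately show "(case ab of (a, b) \<Rightarrow> a * d' + b) \<in> {..<d * d'}"
      "((case ab of (a, b) \<Rightarrow> a * d' + b) div d', (case ab of (a, b) \<Rightarrow> a * d' + b) mod d') = ab"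
      using \<open>ab = (a, b)\<close> by auto
  qed (auto simp: div_mod_less_mult)
  then show ?thesis by (simp add: sum.cartesian_product)
qed

lemma kron_mult_kron_one:
  fixes A B :: "real mat"
  assumes A: "A \<in> carrier_mat d d" and B: "B \<in> carrier_mat d' d'"
  shows "kron A (1\<^sub>m d') * kron (1\<^sub>m d) B = kron A B"
proof (rule eq_matI)
  fix i j assume "i < dim_row (kron A B)" "j < dim_col (kron A B)"
  then have i: "i < d * d'" and j: "j < d * d'" using A B by (auto simp: kron_def)
  note ij = div_mod_less_mult[OF i] div_mod_less_mult[OF j]
  have "(kron A (1\<^sub>m d') * kron (1\<^sub>m d) B) $$ (i, j) =
     (\<Sum>k<d * d'. A $$ (i div d', k div d') * (if i mod d' = k mod d' then 1 else 0) *
      ((if k div d' = j div d' then 1 else 0) * B $$ (k mod d', j mod d')))"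
    using i j A B by (auto simp: kron_def scalar_prod_def atLeast0LessThan div_mod_less_mult intro!: sum.cong)
  also have "\<dots> = (\<Sum>a<d. \<Sum>b<d'. A $$ (i div d', a) * (if i mod d' = b then 1 else 0) *
      ((if a = j div d' then 1 else 0) * B $$ (b, j mod d')))"
    by (rule sum_lessThan_mult_div_mod)
  also have "\<dots> = (\<Sum>a<d. A $$ (i div d', a) * (if a = j div d' then 1 else 0)) *
      (\<Sum>b<d'. (if i mod d' = b then 1 else 0) * B $$ (b, j mod d'))"
    by (simp add: sum_product mult_ac)
  also have "\<dots> = kron A B $$ (i, j)"
    using i j A B ij by (simp add: sum_delta_left sum_delta_right kron_def)
  finally show "(kron A (1\<^sub>m d') * kron (1\<^sub>m d) B) $$ (i, j) = kron A B $$ (i, j)" .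
qed (use A B in \<open>auto simp: kron_def\<close>)

definition kron_basis ::
  "nat \<Rightarrow> nat \<Rightarrow> (nat \<Rightarrow> nat \<Rightarrow> real) \<Rightarrow> (nat \<Rightarrow> nat \<Rightarrow> real) \<Rightarrow> nat \<times> nat \<Rightarrow> real vec" where
  "kron_basis d d' Q Q' = (\<lambda>(a, b). vec (d * d') (\<lambda>i. Q a (i div d') * Q' b (i mod d')))"

lemma kron_basis_sum_outer:
  assumes "i < d * d'" "j < d * d'"
  shows "(\<Sum>ab\<in>A \<times> B. kron_basis d d' Q Q' ab $ i * kron_basis d d' Q Q' ab $ j) =
    (\<Sum>a\<in>A. Q a (i div d') * Q a (j div d')) * (\<Sum>b\<in>B. Q' b (i mod d') * Q' b (j mod d'))"
proof -
  have "(\<Sum>ab\<in>A \<times> B. F ab) = (\<Sum>a\<in>A. \<Sum>b\<in>B. F (a, b))" for F :: "nat \<times> nat \<Rightarrow> real"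
    by (simp add: sum.cartesian_product)
  then show ?thesis using assms by (simp add: kron_basis_def sum_product mult_ac)
qed

lemma orthonormal_on_kron_basis:
  assumes Q: "orthonormal_rows d d Q" and Q': "orthonormal_rows d' d' Q'"
  shows "orthonormal_on (d * d') (kron_basis d d' Q Q') ({..<d} \<times> {..<d'})"
  unfolding orthonormal_on_def
proof (intro conjI ballI)
  fix ab ab' assume "ab \<in> {..<d} \<times> {..<d'}" "ab' \<in> {..<d} \<times> {..<d'}"
  then obtain a b a' b' where ab: "ab = (a, b)" "ab' = (a', b')" "a < d" "b < d'" "a' < d" "b' < d'" by blast
  have "kron_basis d d' Q Q' ab \<bullet> kron_basis d d' Q Q' ab'
    = (\<Sum>k<d * d'. Q a (k div d') * Q' b (k mod d') * (Q a' (k div d') * Q' b' (k mod d')))"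
    by (simp add: kron_basis_def ab scalar_prod_def atLeast0LessThan)
  also have "\<dots> = (\<Sum>x<d. \<Sum>y<d'. Q a x * Q' b y * (Q a' x * Q' b' y))"
    by (rule sum_lessThan_mult_div_mod)
  also have "\<dots> = (\<Sum>x<d. Q a x * Q a' x) * (\<Sum>y<d'. Q' b y * Q' b' y)"
    by (simp add: sum_product mult_ac)
  also have "\<dots> = (if ab = ab' then 1 else 0)"
    using Q Q' ab by (simp add: orthonormal_rows_def)
  finally show "kron_basis d d' Q Q' ab \<bullet> kron_basis d d' Q Q' ab' = (if ab = ab' then 1 else 0)" .
qed (auto simp: kron_basis_def)

lemma delta_div_mod:
  "(if i = j then 1 else 0 :: real) =
     (if i div d' = j div d' then 1 else 0) * (if i mod d' = j mod (d'::nat) then 1 else 0)"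
  by (metis div_mult_mod_eq mult_zero_left mult_1)

lemma reflections_mat_kron_basis_left:
  assumes M: "M \<in> carrier_mat d d"
    and QM: "\<And>i j. i < d \<Longrightarrow> j < d \<Longrightarrow> M $$ (i, j) = (if i = j then 1 else 0) - 2 * (\<Sum>a<g. Q a i * Q a j)"
    and Q': "orthonormal_basis d' Q'"
  shows "reflections_mat (d * d') (kron_basis d d' Q Q') ({..<g} \<times> {..<d'}) = kron M (1\<^sub>m d')"
proof (rule eq_matI)
  fix i j assume "i < dim_row (kron M (1\<^sub>m d'))" "j < dim_col (kron M (1\<^sub>m d'))"
  then have i: "i < d * d'" and j: "j < d * d'" using M by (auto simp: kron_def)
  note ij = div_mod_less_mult[OF i] div_mod_less_mult[OF j]
  let ?S = "\<Sum>a<g. Q a (i div d') * Q a (j div d')"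
  have "reflections_mat (d * d') (kron_basis d d' Q Q') ({..<g} \<times> {..<d'}) $$ (i, j)
      = (if i = j then 1 else 0) - 2 * (?S * (\<Sum>b<d'. Q' b (i mod d') * Q' b (j mod d')))"
    using i j by (simp add: reflections_mat_def kron_basis_sum_outer)
  also have "\<dots> = (if i = j then 1 else 0) - 2 * (?S * (if i mod d' = j mod d' then 1 else 0))"
    using Q' ij by (simp add: orthonormal_basis_def)
  also have "\<dots> = M $$ (i div d', j div d') * (if i mod d' = j mod d' then 1 else 0)"
    unfolding QM[OF ij(1) ij(3)] delta_div_mod[of i j d'] by (simp only: left_diff_distrib mult.assoc)
  also have "\<dots> = kron M (1\<^sub>m d') $$ (i, j)"
    using i j ij M by (simp add: kron_def)
  finally show "reflections_mat (d * d') (kron_basis d d' Q Q') ({..<g} \<times> {..<d'}) $$ (i, j) = kron M (1\<^sub>m d') $$ (i, j)" .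
qed (use M in \<open>auto simp: kron_def reflections_mat_def\<close>)

lemma reflections_mat_kron_basis_right:
  assumes M': "M' \<in> carrier_mat d' d'"
    and QM': "\<And>i j. i < d' \<Longrightarrow> j < d' \<Longrightarrow> M' $$ (i, j) = (if i = j then 1 else 0) - 2 * (\<Sum>b<g'. Q' b i * Q' b j)"
    and Q: "orthonormal_basis d Q"
  shows "reflections_mat (d * d') (kron_basis d d' Q Q') ({..<d} \<times> {..<g'}) = kron (1\<^sub>m d) M'"
proof (rule eq_matI)
  fix i j assume "i < dim_row (kron (1\<^sub>m d) M')" "j < dim_col (kron (1\<^sub>m d) M')"
  then have i: "i < d * d'" and j: "j < d * d'" using M' by (auto simp: kron_def)
  note ij = div_mod_less_mult[OF i] div_mod_less_mult[OF j]
  let ?S = "\<Sum>b<g'. Q' b (i mod d') * Q' b (j mod d')"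
  have "reflections_mat (d * d') (kron_basis d d' Q Q') ({..<d} \<times> {..<g'}) $$ (i, j)
      = (if i = j then 1 else 0) - 2 * ((\<Sum>a<d. Q a (i div d') * Q a (j div d')) * ?S)"
    using i j by (simp add: reflections_mat_def kron_basis_sum_outer)
  also have "\<dots> = (if i = j then 1 else 0) - 2 * ((if i div d' = j div d' then 1 else 0) * ?S)"
    using Q ij by (simp add: orthonormal_basis_def)
  also have "\<dots> = (if i div d' = j div d' then 1 else 0) * M' $$ (i mod d', j mod d')"
    unfolding QM'[OF ij(2) ij(4)] delta_div_mod[of i j d'] by (simp add: right_diff_distrib mult.left_commute)
  also have "\<dots> = kron (1\<^sub>m d) M' $$ (i, j)"
    using i j ij M' by (simp add: kron_def)
  finally show "reflections_mat (d * d') (kron_basis d d' Q Q') ({..<d} \<times> {..<g'}) $$ (i, j) = kron (1\<^sub>m d) M' $$ (i, j)" .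
qed (use M' in \<open>auto simp: kron_def reflections_mat_def\<close>)

section \<open>Lifts of commuting involutions on a tensor product\<close>

text \<open>Of the basis vectors \<open>Q_a \<otimes> Q'_b\<close>, the first product runs over the \<open>g d'\<close> with \<open>a < g\<close>, the
  second over the \<open>d g'\<close> with \<open>b < g'\<close>; \<open>g g'\<close> of them are shared, so the sign is
  \<open>(-1)^(g d' d g' + g g')\<close>.\<close>

lemma cl_prod_kron_basis_commute:
  assumes Q: "orthonormal_rows d d Q" and Q': "orthonormal_rows d' d' Q'" and "g \<le> d" "g' \<le> d'"
  defines "f \<equiv> \<lambda>k. cl_vec (d * d') (kron_basis d d' Q Q' k)"
  shows "cl_mult (d * d') (cl_prod (d * d') f (List.product [0..<g] [0..<d']))
      (cl_prod (d * d') f (List.product [0..<d] [0..<g'])) =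
    cl_scale ((-1) ^ ((d * d' + 1) * g * g')) (cl_mult (d * d') (cl_prod (d * d') f (List.product [0..<d] [0..<g']))
      (cl_prod (d * d') f (List.product [0..<g] [0..<d'])))"
proof -
  let ?SA = "List.product [0..<g] [0..<d']" and ?SB = "List.product [0..<d] [0..<g']"
  have "anticommuting_on (d * d') f ({..<d} \<times> {..<d'})"
    unfolding f_def by (intro anticommuting_on_cl_vec orthonormal_on_kron_basis Q Q')
  moreover have "set ?SA \<subseteq> {..<d} \<times> {..<d'}" "set ?SB \<subseteq> {..<d} \<times> {..<d'}" using assms by auto
  moreover have "set ?SA \<inter> set ?SB = {..<g} \<times> {..<g'}" using assms by auto
  then have "length ?SA * length ?SB + card (set ?SA \<inter> set ?SB) = (d * d' + 1) * g * g'"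
    by (simp add: card_cartesian_product algebra_simps)
  ultimately show ?thesis
    using cl_prod_commute[of "d * d'" f _ ?SA ?SB] by (simp add: distinct_product)
qed

lemma kron_involutions_lifts:
  fixes M M' :: "real mat"
  assumes M: "M \<in> carrier_mat d d" "transpose_mat M * M = 1\<^sub>m d" "M * M = 1\<^sub>m d"
    and M': "M' \<in> carrier_mat d' d'" "transpose_mat M' * M' = 1\<^sub>m d'" "M' * M' = 1\<^sub>m d'"
    and g: "real d - 2 * real g = (\<Sum>i<d. M $$ (i, i))"
    and g': "real d' - 2 * real g' = (\<Sum>i<d'. M' $$ (i, i))"
  obtains x y where "x \<in> Pin (d * d')" "pin_rho (d * d') x = kron M (1\<^sub>m d')"
    "y \<in> Pin (d * d')" "pin_rho (d * d') y = kron (1\<^sub>m d) M'"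
    "cl_mult (d * d') x y = cl_scale ((-1) ^ ((d * d' + 1) * g * g')) (cl_mult (d * d') y x)"
proof -
  obtain Q g0 where Q: "orthonormal_basis d Q" "g0 \<le> d" "real d - 2 * real g0 = (\<Sum>i<d. M $$ (i, i))"
    and QM: "\<And>i j. i < d \<Longrightarrow> j < d \<Longrightarrow> M $$ (i, j) = (if i = j then 1 else 0) - 2 * (\<Sum>a<g0. Q a i * Q a j)"
    using orthogonal_involution_decomp[OF M] by blast
  obtain Q' g0' where Q': "orthonormal_basis d' Q'" "g0' \<le> d'" "real d' - 2 * real g0' = (\<Sum>i<d'. M' $$ (i, i))"
    and QM': "\<And>i j. i < d' \<Longrightarrow> j < d' \<Longrightarrow> M' $$ (i, j) = (if i = j then 1 else 0) - 2 * (\<Sum>b<g0'. Q' b i * Q' b j)"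
    using orthogonal_involution_decomp[OF M'] by blast
  have gg: "g0 = g" "g0' = g'" using g g' Q(3) Q'(3) by simp_all
  have rows: "orthonormal_rows d d Q" "orthonormal_rows d' d' Q'"
    using Q(1) Q'(1) by (simp_all add: orthonormal_basis_def)
  define P where "P = kron_basis d d' Q Q'"
  define SA where "SA = List.product [0..<g] [0..<d']"
  define SB where "SB = List.product [0..<d] [0..<g']"
  have on: "orthonormal_on (d * d') P (set SA)" "orthonormal_on (d * d') P (set SB)"
    using orthonormal_on_kron_basis[OF rows] Q(2) Q'(2) gg
    by (auto simp: P_def SA_def SB_def intro: orthonormal_on_subset)
  have dist: "distinct SA" "distinct SB" by (simp_all add: SA_def SB_def distinct_product)
  show thesis
  proof (rule that)
    show "cl_prod (d * d') (\<lambda>k. cl_vec (d * d') (P k)) SA \<in> Pin (d * d')"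
      "cl_prod (d * d') (\<lambda>k. cl_vec (d * d') (P k)) SB \<in> Pin (d * d')"
      using on by (auto intro!: cl_prod_Pin simp: orthonormal_on_def normalized_vec_def)
    show "pin_rho (d * d') (cl_prod (d * d') (\<lambda>k. cl_vec (d * d') (P k)) SA) = kron M (1\<^sub>m d')"
      unfolding pin_rho_cl_prod[OF on(1) dist(1)] unfolding P_def SA_def gg[symmetric]
      by (simp add: atLeast0LessThan reflections_mat_kron_basis_left[OF M(1) QM Q'(1)])
    show "pin_rho (d * d') (cl_prod (d * d') (\<lambda>k. cl_vec (d * d') (P k)) SB) = kron (1\<^sub>m d) M'"
      unfolding pin_rho_cl_prod[OF on(2) dist(2)] unfolding P_def SB_def gg[symmetric]
      by (simp add: atLeast0LessThan reflections_mat_kron_basis_right[OF M'(1) QM' Q(1)])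
  qed (use cl_prod_kron_basis_commute[OF rows Q(2) Q'(2)] in \<open>simp add: P_def SA_def SB_def gg\<close>)
qed

lemma Pin_kron_lifts_commute_sign:
  fixes M M' :: "real mat"
  assumes M: "M \<in> carrier_mat d d" "transpose_mat M * M = 1\<^sub>m d" "M * M = 1\<^sub>m d"
    and M': "M' \<in> carrier_mat d' d'" "transpose_mat M' * M' = 1\<^sub>m d'" "M' * M' = 1\<^sub>m d'"
    and g: "real d - 2 * real g = (\<Sum>i<d. M $$ (i, i))"
    and g': "real d' - 2 * real g' = (\<Sum>i<d'. M' $$ (i, i))"
    and x: "x \<in> Pin (d * d')" "pin_rho (d * d') x = kron M (1\<^sub>m d')"
    and y: "y \<in> Pin (d * d')" "pin_rho (d * d') y = kron (1\<^sub>m d) M'"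
  shows "cl_mult (d * d') x y = cl_scale ((-1) ^ ((d * d' + 1) * g * g')) (cl_mult (d * d') y x)"
proof -
  obtain x0 y0 where x0: "x0 \<in> Pin (d * d')" "pin_rho (d * d') x0 = kron M (1\<^sub>m d')"
    and y0: "y0 \<in> Pin (d * d')" "pin_rho (d * d') y0 = kron (1\<^sub>m d) M'"
    and comm: "cl_mult (d * d') x0 y0 = cl_scale ((-1) ^ ((d * d' + 1) * g * g')) (cl_mult (d * d') y0 x0)"
    using kron_involutions_lifts[OF M M' g g'] by blast
  show ?thesis
    by (rule Pin_commutation_sign_unique[OF x(1) x0(1) _ y(1) y0(1) _ comm]) (simp_all only: x y x0 y0)
qed

section \<open>Orthogonal representations of symmetric groups\<close>

lemma orth_rep_carrier: "orth_rep G d \<pi> \<Longrightarrow> g \<in> carrier G \<Longrightarrow> \<pi> g \<in> carrier_mat d d"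
  by (simp add: orth_rep_def orth_mat_def)

lemma orth_rep_one:
  assumes G: "monoid G" and \<pi>: "orth_rep G d \<pi>"
  shows "\<pi> \<one>\<^bsub>G\<^esub> = 1\<^sub>m d"
proof -
  let ?A = "\<pi> \<one>\<^bsub>G\<^esub>"
  have A: "?A \<in> carrier_mat d d" "transpose_mat ?A * ?A = 1\<^sub>m d"
    using \<pi> monoid.one_closed[OF G] by (auto simp: orth_rep_def orth_mat_def)
  have AA: "?A * ?A = ?A"
    using \<pi> monoid.one_closed[OF G] monoid.l_one[OF G] unfolding orth_rep_def by metis
  have "?A = 1\<^sub>m d * ?A" using A(1) by simp
  also have "\<dots> = (transpose_mat ?A * ?A) * ?A" by (simp only: A(2))
  also have "\<dots> = transpose_mat ?A * (?A * ?A)" using A(1) by simp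
  also have "\<dots> = 1\<^sub>m d" using AA A by simp
  finally show ?thesis .
qed

lemma orth_rep_involution:
  assumes G: "monoid G" and \<pi>: "orth_rep G d \<pi>" and t: "t \<in> carrier G" "t \<otimes>\<^bsub>G\<^esub> t = \<one>\<^bsub>G\<^esub>"
  shows "\<pi> t \<in> carrier_mat d d" "transpose_mat (\<pi> t) * \<pi> t = 1\<^sub>m d" "\<pi> t * \<pi> t = 1\<^sub>m d"
proof -
  show "\<pi> t \<in> carrier_mat d d" "transpose_mat (\<pi> t) * \<pi> t = 1\<^sub>m d"
    using \<pi> t by (auto simp: orth_rep_def orth_mat_def)
  have "\<pi> t * \<pi> t = \<pi> (t \<otimes>\<^bsub>G\<^esub> t)" using \<pi> t(1) by (simp add: orth_rep_def)
  then show "\<pi> t * \<pi> t = 1\<^sub>m d" using t orth_rep_one[OF G \<pi>] by simp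
qed

lemma sum_diag_mult_commute:
  fixes A B :: "real mat"
  assumes "A \<in> carrier_mat d d" "B \<in> carrier_mat d d"
  shows "(\<Sum>i<d. (A * B) $$ (i, i)) = (\<Sum>i<d. (B * A) $$ (i, i))"
proof -
  have "(\<Sum>i<d. (A * B) $$ (i, i)) = (\<Sum>i<d. \<Sum>k<d. A $$ (i, k) * B $$ (k, i))"
    using assms by (simp add: scalar_prod_def atLeast0LessThan)
  also have "\<dots> = (\<Sum>k<d. \<Sum>i<d. B $$ (k, i) * A $$ (i, k))"
    by (subst sum.swap) (simp add: mult.commute)
  also have "\<dots> = (\<Sum>i<d. (B * A) $$ (i, i))"
    using assms by (simp add: scalar_prod_def atLeast0LessThan)
  finally show ?thesis .
qed

lemma character_conj:
  assumes G: "group G" and \<pi>: "orth_rep G d \<pi>" and gh: "g \<in> carrier G" "h \<in> carrier G" "r \<in> carrier G"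
    and conj: "g \<otimes>\<^bsub>G\<^esub> r = r \<otimes>\<^bsub>G\<^esub> h"
  shows "character \<pi> g = character \<pi> h"
proof -
  let ?r' = "inv\<^bsub>G\<^esub> r"
  have r': "?r' \<in> carrier G" using G gh by simp
  have car: "\<pi> g \<in> carrier_mat d d" "\<pi> h \<in> carrier_mat d d" "\<pi> r \<in> carrier_mat d d" "\<pi> ?r' \<in> carrier_mat d d"
    using orth_rep_carrier[OF \<pi>] gh r' by auto
  have "\<pi> r * \<pi> ?r' = \<pi> (r \<otimes>\<^bsub>G\<^esub> ?r')" "\<pi> ?r' * \<pi> r = \<pi> (?r' \<otimes>\<^bsub>G\<^esub> r)"
    using \<pi> gh r' by (simp_all add: orth_rep_def)
  then have one: "\<pi> r * \<pi> ?r' = 1\<^sub>m d" "\<pi> ?r' * \<pi> r = 1\<^sub>m d"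
    using G gh orth_rep_one[OF group.is_monoid[OF G] \<pi>] by (simp_all add: group.r_inv group.l_inv)
  have "\<pi> (g \<otimes>\<^bsub>G\<^esub> r) = \<pi> g * \<pi> r" "\<pi> (r \<otimes>\<^bsub>G\<^esub> h) = \<pi> r * \<pi> h"
    using \<pi> gh by (simp_all add: orth_rep_def)
  then have comm: "\<pi> g * \<pi> r = \<pi> r * \<pi> h" using conj by simp
  have "\<pi> g = \<pi> g * (\<pi> r * \<pi> ?r')" using one car by simp
  also have "\<dots> = (\<pi> g * \<pi> r) * \<pi> ?r'" using car by simp
  also have "\<dots> = \<pi> r * (\<pi> h * \<pi> ?r')" unfolding comm using car by simp
  finally have "(\<Sum>i<d. \<pi> g $$ (i, i)) = (\<Sum>i<d. (\<pi> r * (\<pi> h * \<pi> ?r')) $$ (i, i))"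
    by simp
  also have "\<dots> = (\<Sum>i<d. ((\<pi> h * \<pi> ?r') * \<pi> r) $$ (i, i))"
    using car by (intro sum_diag_mult_commute) auto
  also have "(\<pi> h * \<pi> ?r') * \<pi> r = \<pi> h" using car one by simp
  finally show ?thesis using car by (simp add: character_def)
qed

lemma transpose_in_sym_group: "a \<in> {1..n} \<Longrightarrow> b \<in> {1..n} \<Longrightarrow> Transposition.transpose a b \<in> carrier (sym_group n)"
  by (simp add: sym_group_carrier permutes_swap_id)

lemma sym_group_monoid: "monoid (sym_group n)"
  using group.is_monoid[OF sym_group_is_group] .

lemma orth_rep_id: "orth_rep (sym_group n) d \<pi> \<Longrightarrow> \<pi> id = 1\<^sub>m d"
  using orth_rep_one[OF sym_group_monoid] by (simp add: sym_group_one)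

lemma transpose_conj_s1:
  assumes a: "a \<in> {1..n}" and b: "b \<in> {1..n}" and ab: "a \<noteq> b"
  obtains r where "r \<in> carrier (sym_group n)" "Transposition.transpose a b \<circ> r = r \<circ> s1"
proof
  have n2: "2 \<le> n" using a b ab by auto
  define c where "c = Transposition.transpose 1 a b"
  have c: "c \<in> {1..n}" using a b n2 by (auto simp: c_def transpose_def)
  have c1: "c \<noteq> 1" using ab a by (auto simp: c_def transpose_def)
  define r where "r = Transposition.transpose 1 a \<circ> Transposition.transpose 2 c"
  show rc: "r \<in> carrier (sym_group n)"
    unfolding r_def sym_group_carrier using a c n2 by (intro permutes_compose permutes_swap_id) auto
  then have rp: "r permutes {1..n}" by (simp add: sym_group_carrier)
  have "r 1 = a" "r 2 = b" using c1 ab by (auto simp: r_def c_def transpose_def)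
  then have "inv_into UNIV r a = 1" "inv_into UNIV r b = 2" using permutes_inv_eq[OF rp] by auto
  then show "Transposition.transpose a b \<circ> r = r \<circ> s1"
    using transpose_comp_eq[OF permutes_bij[OF rp], of a b] by (simp add: s1_def)
qed

lemma character_transpose:
  assumes \<pi>: "orth_rep (sym_group n) d \<pi>" and "a \<in> {1..n}" "b \<in> {1..n}" "a \<noteq> b"
  shows "character \<pi> (Transposition.transpose a b) = character \<pi> s1"
proof -
  obtain r where "r \<in> carrier (sym_group n)" "Transposition.transpose a b \<circ> r = r \<circ> s1"
    using transpose_conj_s1 assms(2-4) by blast
  moreover have "1 \<in> {1..n}" "2 \<in> {1..n}" using assms(2-4) by auto
  ultimately show ?thesis
    using assms(2,3) by (intro character_conj[OF sym_group_is_group \<pi>]) (auto simp: s1_def sym_group_mult transpose_in_sym_group)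
qed

lemma orth_rep_transpose:
  assumes \<pi>: "orth_rep (sym_group n) d \<pi>" and "a \<in> {1..n}" "b \<in> {1..n}"
  shows "\<pi> (Transposition.transpose a b) \<in> carrier_mat d d"
    "transpose_mat (\<pi> (Transposition.transpose a b)) * \<pi> (Transposition.transpose a b) = 1\<^sub>m d"
    "\<pi> (Transposition.transpose a b) * \<pi> (Transposition.transpose a b) = 1\<^sub>m d"
  using orth_rep_involution[OF sym_group_monoid \<pi> transpose_in_sym_group[OF assms(2,3)]]
  by (simp_all add: sym_group_mult sym_group_one)

lemma gval_transpose:
  assumes \<pi>: "orth_rep (sym_group n) d \<pi>" and ab: "a \<in> {1..n}" "b \<in> {1..n}" "a \<noteq> b"
  obtains g :: nat where "gval n d \<pi> = real g"
    "real d - 2 * real g = (\<Sum>i<d. \<pi> (Transposition.transpose a b) $$ (i, i))"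
proof -
  obtain Q g where g: "real d - 2 * real g = (\<Sum>i<d. \<pi> (Transposition.transpose a b) $$ (i, i))"
    using orthogonal_involution_decomp[OF orth_rep_transpose[OF \<pi> ab(1,2)]] by blast
  have "character \<pi> s1 = (\<Sum>i<d. \<pi> (Transposition.transpose a b) $$ (i, i))"
    using character_transpose[OF assms] orth_rep_transpose(1)[OF \<pi> ab(1,2)] by (simp add: character_def)
  moreover have "2 \<le> n" using ab by auto
  ultimately have "gval n d \<pi> = real g" using g by (simp add: gval_def)
  with g show thesis using that by blast
qed

section \<open>Lifts to Pin and direct products\<close>

definition pin_lift :: "('g, 'b) monoid_scheme \<Rightarrow> nat \<Rightarrow> ('g \<Rightarrow> real mat) \<Rightarrow> ('g \<Rightarrow> cl) \<Rightarrow> bool" where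
  "pin_lift G d \<pi> \<phi> \<longleftrightarrow> (\<forall>g\<in>carrier G. \<phi> g \<in> Pin d \<and> pin_rho d (\<phi> g) = \<pi> g) \<and>
     (\<forall>g\<in>carrier G. \<forall>h\<in>carrier G. \<phi> (g \<otimes>\<^bsub>G\<^esub> h) = cl_mult d (\<phi> g) (\<phi> h))"

lemma spinorial_iff_pin_lift: "spinorial G d \<pi> \<longleftrightarrow> (\<exists>\<phi>. pin_lift G d \<pi> \<phi>)"
  by (simp add: spinorial_def pin_lift_def)

lemma pin_liftD:
  assumes "pin_lift G d \<pi> \<phi>" "g \<in> carrier G"
  shows "\<phi> g \<in> Pin d" "pin_rho d (\<phi> g) = \<pi> g"
  using assms by (simp_all add: pin_lift_def)

lemma pin_lift_mult:
  "pin_lift G d \<pi> \<phi> \<Longrightarrow> g \<in> carrier G \<Longrightarrow> h \<in> carrier G \<Longrightarrow> \<phi> (g \<otimes>\<^bsub>G\<^esub> h) = cl_mult d (\<phi> g) (\<phi> h)"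
  by (simp add: pin_lift_def)

lemma pin_lift_one:
  assumes G: "monoid G" and \<phi>: "pin_lift G d \<pi> \<phi>"
  shows "\<phi> \<one>\<^bsub>G\<^esub> = cl_one"
proof (rule Pin_idem_eq_one)
  show "\<phi> \<one>\<^bsub>G\<^esub> \<in> Pin d" using pin_liftD(1)[OF \<phi> monoid.one_closed[OF G]] .
  have "\<phi> (\<one>\<^bsub>G\<^esub> \<otimes>\<^bsub>G\<^esub> \<one>\<^bsub>G\<^esub>) = cl_mult d (\<phi> \<one>\<^bsub>G\<^esub>) (\<phi> \<one>\<^bsub>G\<^esub>)"
    using pin_lift_mult[OF \<phi>] monoid.one_closed[OF G] by simp
  then show "cl_mult d (\<phi> \<one>\<^bsub>G\<^esub>) (\<phi> \<one>\<^bsub>G\<^esub>) = \<phi> \<one>\<^bsub>G\<^esub>" using G by simp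
qed

lemma pin_lift_restrict_left:
  assumes H: "monoid H" and \<phi>: "pin_lift (G \<times>\<times> H) d \<pi> \<phi>"
  shows "pin_lift G d (\<lambda>g. \<pi> (g, \<one>\<^bsub>H\<^esub>)) (\<lambda>g. \<phi> (g, \<one>\<^bsub>H\<^esub>))"
  unfolding pin_lift_def
proof (intro conjI ballI)
  fix g assume "g \<in> carrier G"
  then show "\<phi> (g, \<one>\<^bsub>H\<^esub>) \<in> Pin d" "pin_rho d (\<phi> (g, \<one>\<^bsub>H\<^esub>)) = \<pi> (g, \<one>\<^bsub>H\<^esub>)"
    using pin_liftD[OF \<phi>] monoid.one_closed[OF H] by simp_all
next
  fix g g' assume "g \<in> carrier G" "g' \<in> carrier G"
  then show "\<phi> (g \<otimes>\<^bsub>G\<^esub> g', \<one>\<^bsub>H\<^esub>) = cl_mult d (\<phi> (g, \<one>\<^bsub>H\<^esub>)) (\<phi> (g', \<one>\<^bsub>H\<^esub>))"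
    using pin_lift_mult[OF \<phi>, of "(g, \<one>\<^bsub>H\<^esub>)" "(g', \<one>\<^bsub>H\<^esub>)"] H by simp
qed

lemma pin_lift_restrict_right:
  assumes G: "monoid G" and \<phi>: "pin_lift (G \<times>\<times> H) d \<pi> \<phi>"
  shows "pin_lift H d (\<lambda>h. \<pi> (\<one>\<^bsub>G\<^esub>, h)) (\<lambda>h. \<phi> (\<one>\<^bsub>G\<^esub>, h))"
  unfolding pin_lift_def
proof (intro conjI ballI)
  fix h assume "h \<in> carrier H"
  then show "\<phi> (\<one>\<^bsub>G\<^esub>, h) \<in> Pin d" "pin_rho d (\<phi> (\<one>\<^bsub>G\<^esub>, h)) = \<pi> (\<one>\<^bsub>G\<^esub>, h)"
    using pin_liftD[OF \<phi>] monoid.one_closed[OF G] by simp_all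
next
  fix h h' assume "h \<in> carrier H" "h' \<in> carrier H"
  then show "\<phi> (\<one>\<^bsub>G\<^esub>, h \<otimes>\<^bsub>H\<^esub> h') = cl_mult d (\<phi> (\<one>\<^bsub>G\<^esub>, h)) (\<phi> (\<one>\<^bsub>G\<^esub>, h'))"
    using pin_lift_mult[OF \<phi>, of "(\<one>\<^bsub>G\<^esub>, h)" "(\<one>\<^bsub>G\<^esub>, h')"] G by simp
qed

lemma pin_lift_DirProd_commute:
  assumes G: "monoid G" and H: "monoid H" and \<phi>: "pin_lift (G \<times>\<times> H) d \<pi> \<phi>"
    and gh: "g \<in> carrier G" "h \<in> carrier H"
  shows "cl_mult d (\<phi> (g, \<one>\<^bsub>H\<^esub>)) (\<phi> (\<one>\<^bsub>G\<^esub>, h)) = cl_mult d (\<phi> (\<one>\<^bsub>G\<^esub>, h)) (\<phi> (g, \<one>\<^bsub>H\<^esub>))"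
  using pin_lift_mult[OF \<phi>, of "(g, \<one>\<^bsub>H\<^esub>)" "(\<one>\<^bsub>G\<^esub>, h)"]
    pin_lift_mult[OF \<phi>, of "(\<one>\<^bsub>G\<^esub>, h)" "(g, \<one>\<^bsub>H\<^esub>)"] G H gh
  by simp

lemma pin_lift_DirProd:
  assumes G: "monoid G" and H: "monoid H"
    and \<phi>: "pin_lift G d (\<lambda>g. \<pi> (g, \<one>\<^bsub>H\<^esub>)) \<phi>" and \<psi>: "pin_lift H d (\<lambda>h. \<pi> (\<one>\<^bsub>G\<^esub>, h)) \<psi>"
    and comm: "\<And>g h. g \<in> carrier G \<Longrightarrow> h \<in> carrier H \<Longrightarrow> cl_mult d (\<phi> g) (\<psi> h) = cl_mult d (\<psi> h) (\<phi> g)"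
    and split: "\<And>g h. g \<in> carrier G \<Longrightarrow> h \<in> carrier H \<Longrightarrow> \<pi> (g, h) = \<pi> (g, \<one>\<^bsub>H\<^esub>) * \<pi> (\<one>\<^bsub>G\<^esub>, h)"
  shows "pin_lift (G \<times>\<times> H) d \<pi> (\<lambda>(g, h). cl_mult d (\<phi> g) (\<psi> h))"
  unfolding pin_lift_def
proof (intro conjI ballI)
  fix p assume "p \<in> carrier (G \<times>\<times> H)"
  then obtain g h where p: "p = (g, h)" "g \<in> carrier G" "h \<in> carrier H" by auto
  then have "\<phi> g \<in> Pin d" "\<psi> h \<in> Pin d" using \<phi> \<psi> by (auto simp: pin_lift_def)
  then show "(case p of (g, h) \<Rightarrow> cl_mult d (\<phi> g) (\<psi> h)) \<in> Pin d"
    "pin_rho d (case p of (g, h) \<Rightarrow> cl_mult d (\<phi> g) (\<psi> h)) = \<pi> p"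
    using p \<phi> \<psi> split by (auto simp: pin_lift_def pin_rho_mult Pin_mult_closed)
next
  fix p q assume "p \<in> carrier (G \<times>\<times> H)" "q \<in> carrier (G \<times>\<times> H)"
  then obtain g h g' h' where pq: "p = (g, h)" "q = (g', h')"
    and in_carrier: "g \<in> carrier G" "h \<in> carrier H" "g' \<in> carrier G" "h' \<in> carrier H" by auto
  have "cl_mult d (\<phi> (g \<otimes>\<^bsub>G\<^esub> g')) (\<psi> (h \<otimes>\<^bsub>H\<^esub> h'))
      = cl_mult d (\<phi> g) (cl_mult d (cl_mult d (\<phi> g') (\<psi> h)) (\<psi> h'))"
    using \<phi> \<psi> in_carrier by (simp add: pin_lift_def cl_mult_assoc)
  also have "\<dots> = cl_mult d (cl_mult d (\<phi> g) (\<psi> h)) (cl_mult d (\<phi> g') (\<psi> h'))"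
    unfolding comm[OF in_carrier(3,2)] by (simp add: cl_mult_assoc)
  finally show "(case p \<otimes>\<^bsub>G \<times>\<times> H\<^esub> q of (g, h) \<Rightarrow> cl_mult d (\<phi> g) (\<psi> h)) =
      cl_mult d (case p of (g, h) \<Rightarrow> cl_mult d (\<phi> g) (\<psi> h)) (case q of (g, h) \<Rightarrow> cl_mult d (\<phi> g) (\<psi> h))"
    by (simp add: pq)
qed

lemma pin_lift_sym_group_commute:
  assumes \<phi>: "pin_lift (sym_group n) d \<pi> \<phi>" and z: "z \<in> cl_carrier d"
    and transp: "\<And>a b. a \<in> {1..n} \<Longrightarrow> b \<in> {1..n} \<Longrightarrow> a \<noteq> b \<Longrightarrow>
      cl_mult d (\<phi> (Transposition.transpose a b)) z = cl_mult d z (\<phi> (Transposition.transpose a b))"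
    and s: "s \<in> carrier (sym_group n)"
  shows "cl_mult d (\<phi> s) z = cl_mult d z (\<phi> s)"
proof -
  have "s permutes {1..n}" using s by (simp add: sym_group_carrier)
  then show ?thesis using finite_atLeastAtMost[of 1 n]
  proof (induction s rule: permutes_induct)
    case id
    have "\<phi> id = cl_one"
      using pin_lift_one[OF sym_group_monoid \<phi>] by (simp add: sym_group_one)
    then show ?case using z by (simp add: cl_mult_one_left cl_mult_one_right id_def)
  next
    case (swap a b p)
    let ?t = "Transposition.transpose a b"
    have "\<phi> (?t \<circ> p) = cl_mult d (\<phi> ?t) (\<phi> p)"
      using \<phi> swap transpose_in_sym_group[of a n b] by (simp add: pin_lift_def sym_group_carrier sym_group_mult)
    moreover have "cl_mult d (cl_mult d (\<phi> ?t) (\<phi> p)) z = cl_mult d z (cl_mult d (\<phi> ?t) (\<phi> p))"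
    proof -
      have "cl_mult d (cl_mult d (\<phi> ?t) (\<phi> p)) z = cl_mult d (\<phi> ?t) (cl_mult d z (\<phi> p))"
        using swap.IH by (simp add: cl_mult_assoc)
      also have "\<dots> = cl_mult d z (cl_mult d (\<phi> ?t) (\<phi> p))"
        using transp[OF swap.hyps(1-3)] by (simp add: cl_mult_assoc[symmetric])
      finally show ?thesis .
    qed
    ultimately show ?case by (simp add: comp_def)
  qed
qed

lemma pin_lift_carrier: "pin_lift G d \<pi> \<phi> \<Longrightarrow> g \<in> carrier G \<Longrightarrow> \<phi> g \<in> cl_carrier d"
  by (simp add: pin_liftD Pin_carrier)

lemma pin_lifts_sym_groups_commute:
  assumes \<phi>: "pin_lift (sym_group n) d \<pi> \<phi>" and \<psi>: "pin_lift (sym_group n') d \<pi>' \<psi>"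
    and transp: "\<And>a b a' b'. a \<in> {1..n} \<Longrightarrow> b \<in> {1..n} \<Longrightarrow> a \<noteq> b \<Longrightarrow>
      a' \<in> {1..n'} \<Longrightarrow> b' \<in> {1..n'} \<Longrightarrow> a' \<noteq> b' \<Longrightarrow>
      cl_mult d (\<phi> (Transposition.transpose a b)) (\<psi> (Transposition.transpose a' b'))
        = cl_mult d (\<psi> (Transposition.transpose a' b')) (\<phi> (Transposition.transpose a b))"
    and st: "s \<in> carrier (sym_group n)" "t \<in> carrier (sym_group n')"
  shows "cl_mult d (\<phi> s) (\<psi> t) = cl_mult d (\<psi> t) (\<phi> s)"
proof (rule pin_lift_sym_group_commute[OF \<phi> pin_lift_carrier[OF \<psi> st(2)] _ st(1)])
  fix a b assume ab: "a \<in> {1..n}" "b \<in> {1..n}" "a \<noteq> b"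
  have "cl_mult d (\<psi> t) (\<phi> (Transposition.transpose a b)) = cl_mult d (\<phi> (Transposition.transpose a b)) (\<psi> t)"
    using pin_lift_carrier[OF \<phi> transpose_in_sym_group[OF ab(1,2)]]
    by (rule pin_lift_sym_group_commute[OF \<psi> _ _ st(2)]) (use ab transp in auto)
  then show "cl_mult d (\<phi> (Transposition.transpose a b)) (\<psi> t) = cl_mult d (\<psi> t) (\<phi> (Transposition.transpose a b))" ..
qed

lemma ext_tensor_split:
  assumes \<pi>: "orth_rep (sym_group n) d \<pi>" and \<pi>': "orth_rep (sym_group n') d' \<pi>'"
    and st: "s \<in> carrier (sym_group n)" "t \<in> carrier (sym_group n')"
  shows "ext_tensor \<pi> \<pi>' (s, t) = ext_tensor \<pi> \<pi>' (s, id) * ext_tensor \<pi> \<pi>' (id, t)"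
  using kron_mult_kron_one[OF orth_rep_carrier[OF \<pi> st(1)] orth_rep_carrier[OF \<pi>' st(2)]]
    orth_rep_id[OF \<pi>] orth_rep_id[OF \<pi>']
  by (simp add: ext_tensor_def)

lemma even_iff_real_eq_twice_int: "even (e::nat) \<longleftrightarrow> (\<exists>k::int. real e = 2 * real_of_int k)"
proof
  assume "\<exists>k::int. real e = 2 * real_of_int k"
  then obtain k :: int where "real e = 2 * real_of_int k" by blast
  then have "int e = 2 * k" by (metis of_int_eq_iff of_int_mult of_int_numeral of_int_of_nat_eq)
  then show "even e" by presburger
next
  assume "even e"
  then obtain m where "e = 2 * m" by (rule evenE)
  then show "\<exists>k::int. real e = 2 * real_of_int k" by (intro exI[of _ "int m"]) simp
qed

lemma transposition_lifts_commute_iff: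
  assumes \<pi>: "orth_rep (sym_group n) d \<pi>" and \<pi>': "orth_rep (sym_group n') d' \<pi>'"
    and ab: "a \<in> {1..n}" "b \<in> {1..n}" "a \<noteq> b" and ab': "a' \<in> {1..n'}" "b' \<in> {1..n'}" "a' \<noteq> b'"
    and x: "x \<in> Pin (d * d')" "pin_rho (d * d') x = ext_tensor \<pi> \<pi>' (Transposition.transpose a b, id)"
    and y: "y \<in> Pin (d * d')" "pin_rho (d * d') y = ext_tensor \<pi> \<pi>' (id, Transposition.transpose a' b')"
  shows "cl_mult (d * d') x y = cl_mult (d * d') y x \<longleftrightarrow>
    (\<exists>k::int. (real (d * d') + 1) * gval n d \<pi> * gval n' d' \<pi>' = 2 * real_of_int k)"
proof -
  obtain g where g: "gval n d \<pi> = real g"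
    "real d - 2 * real g = (\<Sum>i<d. \<pi> (Transposition.transpose a b) $$ (i, i))"
    using gval_transpose[OF \<pi> ab] by blast
  obtain g' where g': "gval n' d' \<pi>' = real g'"
    "real d' - 2 * real g' = (\<Sum>i<d'. \<pi>' (Transposition.transpose a' b') $$ (i, i))"
    using gval_transpose[OF \<pi>' ab'] by blast
  have "\<pi> id = 1\<^sub>m d" "\<pi>' id = 1\<^sub>m d'"
    using \<pi> \<pi>' by (simp_all add: orth_rep_id)
  then have "cl_mult (d * d') x y = cl_scale ((-1) ^ ((d * d' + 1) * g * g')) (cl_mult (d * d') y x)"
    using x y by (intro Pin_kron_lifts_commute_sign[OF orth_rep_transpose[OF \<pi> ab(1,2)]
        orth_rep_transpose[OF \<pi>' ab'(1,2)] g(2) g'(2)]) (simp_all add: ext_tensor_def)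
  then have "cl_mult (d * d') x y = cl_mult (d * d') y x \<longleftrightarrow> even ((d * d' + 1) * g * g')"
    using cl_scale_neg_one_power_eq_iff[OF Pin_mult_closed[OF y(1) x(1)]] by metis
  also have "\<dots> \<longleftrightarrow> (\<exists>k::int. (real (d * d') + 1) * gval n d \<pi> * gval n' d' \<pi>' = 2 * real_of_int k)"
    unfolding even_iff_real_eq_twice_int g(1) g'(1) by (simp add: algebra_simps)
  finally show ?thesis .
qed

lemma spinorial_ext_tensor_imp:
  assumes \<pi>: "orth_rep (sym_group n) d \<pi>" and \<pi>': "orth_rep (sym_group n') d' \<pi>'"
    and spin: "spinorial (sym_group n \<times>\<times> sym_group n') (d * d') (ext_tensor \<pi> \<pi>')"
  shows "spinorial (sym_group n) (d * d') (\<lambda>\<sigma>. ext_tensor \<pi> \<pi>' (\<sigma>, id))"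
    and "spinorial (sym_group n') (d * d') (\<lambda>\<tau>. ext_tensor \<pi> \<pi>' (id, \<tau>))"
    and "\<exists>k::int. (real (d * d') + 1) * gval n d \<pi> * gval n' d' \<pi>' = 2 * real_of_int k"
proof -
  obtain \<Phi> where \<Phi>: "pin_lift (sym_group n \<times>\<times> sym_group n') (d * d') (ext_tensor \<pi> \<pi>') \<Phi>"
    using spin by (auto simp: spinorial_iff_pin_lift)
  show "spinorial (sym_group n) (d * d') (\<lambda>\<sigma>. ext_tensor \<pi> \<pi>' (\<sigma>, id))"
    "spinorial (sym_group n') (d * d') (\<lambda>\<tau>. ext_tensor \<pi> \<pi>' (id, \<tau>))"
    using pin_lift_restrict_left[OF sym_group_monoid \<Phi>] pin_lift_restrict_right[OF sym_group_monoid \<Phi>]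
    by (auto simp: spinorial_iff_pin_lift sym_group_one)
  show "\<exists>k::int. (real (d * d') + 1) * gval n d \<pi> * gval n' d' \<pi>' = 2 * real_of_int k"
  proof (cases "2 \<le> n \<and> 2 \<le> n'")
    case True
    then have s1: "s1 \<in> carrier (sym_group n)" "s1 \<in> carrier (sym_group n')"
      by (auto simp: s1_def intro: transpose_in_sym_group)
    have "cl_mult (d * d') (\<Phi> (s1, id)) (\<Phi> (id, s1)) = cl_mult (d * d') (\<Phi> (id, s1)) (\<Phi> (s1, id))"
      using pin_lift_DirProd_commute[OF sym_group_monoid sym_group_monoid \<Phi> s1] by (simp add: sym_group_one)
    moreover have "(s1, id) \<in> carrier (sym_group n \<times>\<times> sym_group n')" "(id, s1) \<in> carrier (sym_group n \<times>\<times> sym_group n')"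
      using s1 monoid.one_closed[OF sym_group_monoid] by (auto simp: sym_group_one)
    ultimately show ?thesis
      using \<Phi> True unfolding s1_def pin_lift_def
      by (subst (asm) transposition_lifts_commute_iff[OF \<pi> \<pi>']) auto
  next
    case False
    then show ?thesis by (intro exI[of _ 0]) (auto simp: gval_def)
  qed
qed

lemma spinorial_ext_tensor_if:
  assumes \<pi>: "orth_rep (sym_group n) d \<pi>" and \<pi>': "orth_rep (sym_group n') d' \<pi>'"
    and spin: "spinorial (sym_group n) (d * d') (\<lambda>\<sigma>. ext_tensor \<pi> \<pi>' (\<sigma>, id))"
      "spinorial (sym_group n') (d * d') (\<lambda>\<tau>. ext_tensor \<pi> \<pi>' (id, \<tau>))"
    and parity: "\<exists>k::int. (real (d * d') + 1) * gval n d \<pi> * gval n' d' \<pi>' = 2 * real_of_int k"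
  shows "spinorial (sym_group n \<times>\<times> sym_group n') (d * d') (ext_tensor \<pi> \<pi>')"
proof -
  obtain \<phi> where \<phi>: "pin_lift (sym_group n) (d * d') (\<lambda>\<sigma>. ext_tensor \<pi> \<pi>' (\<sigma>, id)) \<phi>"
    using spin(1) by (auto simp: spinorial_iff_pin_lift)
  obtain \<psi> where \<psi>: "pin_lift (sym_group n') (d * d') (\<lambda>\<tau>. ext_tensor \<pi> \<pi>' (id, \<tau>)) \<psi>"
    using spin(2) by (auto simp: spinorial_iff_pin_lift)
  have transp: "cl_mult (d * d') (\<phi> (Transposition.transpose a b)) (\<psi> (Transposition.transpose a' b'))
      = cl_mult (d * d') (\<psi> (Transposition.transpose a' b')) (\<phi> (Transposition.transpose a b))"
    if "a \<in> {1..n}" "b \<in> {1..n}" "a \<noteq> b" "a' \<in> {1..n'}" "b' \<in> {1..n'}" "a' \<noteq> b'" for a b a' b'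
    using \<phi> \<psi> that parity transpose_in_sym_group unfolding pin_lift_def
    by (subst transposition_lifts_commute_iff[OF \<pi> \<pi>']) auto
  have "cl_mult (d * d') (\<phi> s) (\<psi> t) = cl_mult (d * d') (\<psi> t) (\<phi> s)"
    if "s \<in> carrier (sym_group n)" "t \<in> carrier (sym_group n')" for s t
    using transp that by (rule pin_lifts_sym_groups_commute[OF \<phi> \<psi>])
  then have "pin_lift (sym_group n \<times>\<times> sym_group n') (d * d') (ext_tensor \<pi> \<pi>') (\<lambda>(s, t). cl_mult (d * d') (\<phi> s) (\<psi> t))"
    using \<phi> \<psi> ext_tensor_split[OF \<pi> \<pi>']
    by (intro pin_lift_DirProd[OF sym_group_monoid sym_group_monoid]) (simp_all add: sym_group_one)
  then show ?thesis by (auto simp: spinorial_iff_pin_lift)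
qed

theorem theorem1p2:
  fixes n n' d d' :: nat
    and \<pi> \<pi>' :: "(nat \<Rightarrow> nat) \<Rightarrow> real mat"
  assumes "n \<ge> 1" and "n' \<ge> 1"
    and "orth_rep (sym_group n) d \<pi>"
    and "orth_rep (sym_group n') d' \<pi>'"
  shows "spinorial (sym_group n \<times>\<times> sym_group n') (d * d') (ext_tensor \<pi> \<pi>') \<longleftrightarrow>
     (spinorial (sym_group n) (d * d') (\<lambda>\<sigma>. ext_tensor \<pi> \<pi>' (\<sigma>, id)) \<and>
      spinorial (sym_group n') (d * d') (\<lambda>\<tau>. ext_tensor \<pi> \<pi>' (id, \<tau>)) \<and>
      (\<exists>k::int. (real (d * d') + 1) * gval n d \<pi> * gval n' d' \<pi>' = 2 * real_of_int k))"
  using spinorial_ext_tensor_imp[OF assms(3,4)] spinorial_ext_tensor_if[OF assms(3,4)] by blast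

end
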